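(* Assume the standing assumption and suppose $d(HD)=m+1$. Then the only feasible solution of $(P)$ is $x=0$, and $(D)$ is strictly feasible (has a positive definite feasible solution). Consequently $\operatorname{val}(P)=\operatorname{val}(D)=0$.
   Context: $(P)$: $\sup\{c^Tx:\sum_{i=1}^mx_iA_i\preceq B\}$, $(D)$: $\inf\{B\bullet Y:A_i\bullet Y=c_i\ \forall i,\ Y\succeq0\}$, $(HD)$: $\{Y\succeq0: A_i\bullet Y=0\ (i=1,\dots,m),\ B\bullet Y=0\}$, with $A_i,B\in\mathcal S^n$, $c\in\mathbb R^m$, $S\bullet T=\operatorname{trace}(ST)$. Standing assumption: $(P)$ is feasible, $A_1,\dots,A_m,B$ are linearly independent, $B=I_r\oplus0$ with $0\le r<n$, and $B$ is a maximum-rank slack $B-\sum_ix_iA_i\succeq0$ of $(P)$. Singularity degree $d(H\cap K)$ (for closed convex cone $K$, affine subspace $H$ with $H\cap K\neq\emptyset$): least $k$ such that there are $y_i\in F_{i-1}^*\cap H^\perp$ with $F_0=K$, $F_i=F_{i-1}\cap y_i^\perp$ and $F_k$ equal to the smallest face of $K$ containing $H\cap K$; $K^*=\{y:\langle y,x\rangle\ge0\ \forall x\in K\}$, $H^\perp=\{y:\langle y,x\rangle=0\ \forall x\in H\}$. $d(HD)$ is the singularity degree of the feasible set of $(HD)$ (with $K=\mathcal S^n_+$). *)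

theory Defs
  imports "Jordan_Normal_Form.DL_Rank" "HOL-Library.Extended_Real"
begin

definition sym_mats :: "nat \<Rightarrow> real mat set" where
  "sym_mats n = {A. A \<in> carrier_mat n n \<and> transpose_mat A = A}"

definition psd_cone :: "nat \<Rightarrow> real mat set" where
  "psd_cone n = {A \<in> sym_mats n. \<forall>v \<in> carrier_vec n. v \<bullet> (A *\<^sub>v v) \<ge> 0}"

definition pos_def :: "nat \<Rightarrow> real mat \<Rightarrow> bool" where
  "pos_def n A \<longleftrightarrow> A \<in> sym_mats n \<and>
     (\<forall>v \<in> carrier_vec n. v \<noteq> 0\<^sub>v n \<longrightarrow> v \<bullet> (A *\<^sub>v v) > 0)"

definition mtrace :: "real mat \<Rightarrow> real" where
  "mtrace A = (\<Sum>i<dim_row A. A $$ (i,i))"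

definition minner :: "real mat \<Rightarrow> real mat \<Rightarrow> real" where
  "minner S T = mtrace (S * T)"

definition mlincomb :: "nat \<Rightarrow> nat \<Rightarrow> (nat \<Rightarrow> real) \<Rightarrow> (nat \<Rightarrow> real mat) \<Rightarrow> real mat" where
  "mlincomb n m x A = mat n n (\<lambda>(j,k). \<Sum>i<m. x i * A i $$ (j,k))"

definition block_id :: "nat \<Rightarrow> nat \<Rightarrow> real mat" where
  "block_id n r = mat n n (\<lambda>(j,k). if j = k \<and> j < r then 1 else 0)"

definition mrank :: "nat \<Rightarrow> real mat \<Rightarrow> nat" where
  "mrank n A = vec_space.rank n A"

definition dual_cone :: "nat \<Rightarrow> real mat set \<Rightarrow> real mat set" where
  "dual_cone n F = {Y \<in> sym_mats n. \<forall>X \<in> F. minner Y X \<ge> 0}"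

definition orth :: "nat \<Rightarrow> real mat set \<Rightarrow> real mat set" where
  "orth n H = {Y \<in> sym_mats n. \<forall>X \<in> H. minner Y X = 0}"

definition is_face :: "real mat set \<Rightarrow> real mat set \<Rightarrow> bool" where
  "is_face K F \<longleftrightarrow> F \<subseteq> K \<and>
     (\<forall>x \<in> F. \<forall>y \<in> F. \<forall>t::real. 0 \<le> t \<and> t \<le> 1 \<longrightarrow> (1 - t) \<cdot>\<^sub>m x + t \<cdot>\<^sub>m y \<in> F) \<and>
     (\<forall>x \<in> K. \<forall>y \<in> K. \<forall>t::real. 0 < t \<and> t < 1 \<and> (1 - t) \<cdot>\<^sub>m x + t \<cdot>\<^sub>m y \<in> F
        \<longrightarrow> x \<in> F \<and> y \<in> F)"

definition min_face :: "real mat set \<Rightarrow> real mat set \<Rightarrow> real mat set" where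
  "min_face K S = \<Inter>{F. is_face K F \<and> S \<subseteq> F}"

(* F_0 = K, F_{i} = F_{i-1} \<inter> y_i^\<perp>; here y_{i+1} = ys i *)
primrec face_chain :: "real mat set \<Rightarrow> (nat \<Rightarrow> real mat) \<Rightarrow> nat \<Rightarrow> real mat set" where
  "face_chain K ys 0 = K"
| "face_chain K ys (Suc i) = face_chain K ys i \<inter> {X. minner (ys i) X = 0}"

definition facial_reduction_in :: "nat \<Rightarrow> real mat set \<Rightarrow> real mat set \<Rightarrow> nat \<Rightarrow> bool" where
  "facial_reduction_in n K H k \<longleftrightarrow> (\<exists>ys.
     (\<forall>i<k. ys i \<in> dual_cone n (face_chain K ys i) \<inter> orth n H) \<and>
     face_chain K ys k = min_face K (H \<inter> K))"

definition sing_degree_is :: "nat \<Rightarrow> real mat set \<Rightarrow> real mat set \<Rightarrow> nat \<Rightarrow> bool" where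
  "sing_degree_is n K H k \<longleftrightarrow> facial_reduction_in n K H k \<and> (\<forall>j<k. \<not> facial_reduction_in n K H j)"

(* the data (A_1..A_m = A 0..A (m-1), B, c) *)
definition P_feasible :: "nat \<Rightarrow> nat \<Rightarrow> (nat \<Rightarrow> real mat) \<Rightarrow> real mat \<Rightarrow> (nat \<Rightarrow> real) \<Rightarrow> bool" where
  "P_feasible n m A B x \<longleftrightarrow> B - mlincomb n m x A \<in> psd_cone n"

definition D_feasible :: "nat \<Rightarrow> nat \<Rightarrow> (nat \<Rightarrow> real mat) \<Rightarrow> (nat \<Rightarrow> real) \<Rightarrow> real mat \<Rightarrow> bool" where
  "D_feasible n m A c Y \<longleftrightarrow> Y \<in> psd_cone n \<and> (\<forall>i<m. minner (A i) Y = c i)"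

definition val_P :: "nat \<Rightarrow> nat \<Rightarrow> (nat \<Rightarrow> real mat) \<Rightarrow> real mat \<Rightarrow> (nat \<Rightarrow> real) \<Rightarrow> ereal" where
  "val_P n m A B c = Sup ((\<lambda>x. ereal (\<Sum>i<m. c i * x i)) ` {x. P_feasible n m A B x})"

definition val_D :: "nat \<Rightarrow> nat \<Rightarrow> (nat \<Rightarrow> real mat) \<Rightarrow> real mat \<Rightarrow> (nat \<Rightarrow> real) \<Rightarrow> ereal" where
  "val_D n m A B c = Inf ((\<lambda>Y. ereal (minner B Y)) ` {Y. D_feasible n m A c Y})"

definition HD_space :: "nat \<Rightarrow> nat \<Rightarrow> (nat \<Rightarrow> real mat) \<Rightarrow> real mat \<Rightarrow> real mat set" where
  "HD_space n m A B = {Y \<in> sym_mats n. (\<forall>i<m. minner (A i) Y = 0) \<and> minner B Y = 0}"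

definition lin_indep_data :: "nat \<Rightarrow> nat \<Rightarrow> (nat \<Rightarrow> real mat) \<Rightarrow> real mat \<Rightarrow> bool" where
  "lin_indep_data n m A B \<longleftrightarrow> (\<forall>(a::nat \<Rightarrow> real) b.
     mlincomb n m a A + b \<cdot>\<^sub>m B = 0\<^sub>m n n \<longrightarrow> (\<forall>i<m. a i = 0) \<and> b = 0)"

end

theory Submission
  imports Defs
begin

text \<open>Take a facial reduction sequence \<open>y\<^sub>1, \<dots>, y\<^sub>m\<^sub>+\<^sub>1\<close> of minimal length for (HD). Its
  members lie in \<open>H\<^sup>\<perp> = span {A\<^sub>1, \<dots>, A\<^sub>m, B}\<close>, and by minimality each step cuts the current
  face properly, which makes them linearly independent: they form a basis of \<open>H\<^sup>\<perp>\<close>. An element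
  \<open>W\<close> of \<open>(S\<^sup>n\<^sub>+)\<^sup>* \<inter> H\<^sup>\<perp>\<close> must vanish on the first face \<open>S\<^sup>n\<^sub>+ \<inter> y\<^sub>1\<^sup>\<perp>\<close>, for otherwise adding \<open>W\<close> to
  \<open>y\<^sub>1\<close> and inserting it as a second step would give \<open>m + 2\<close> independent elements of \<open>H\<^sup>\<perp>\<close>; as
  \<open>y\<^sub>2, \<dots>, y\<^sub>m\<^sub>+\<^sub>1\<close> are independent on that face, \<open>W\<close> is a multiple of \<open>y\<^sub>1\<close>. Since \<open>B\<close> is such an
  element, every \<open>\<Sum> a\<^sub>i A\<^sub>i + b B\<close> in the dual cone is a multiple of \<open>B\<close>, so \<open>a = 0\<close> by linear
  independence. Applied to slacks of (P), which are positive semidefinite and hence in the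
  self-dual cone, this leaves only \<open>x = 0\<close>; applied to a separating functional, it yields a
  positive definite solution of (D), which can be scaled to make \<open>B \<bullet> Y\<close> arbitrarily small.\<close>

definition trace_inner :: "nat \<Rightarrow> real mat \<Rightarrow> real mat \<Rightarrow> real" where
  "trace_inner n X Y = (\<Sum>a<n. \<Sum>b<n. X $$ (a,b) * Y $$ (b,a))"

lemma minner_eq_trace_inner:
  assumes "X \<in> carrier_mat n n" "Y \<in> carrier_mat n n"
  shows "minner X Y = trace_inner n X Y"
proof -
  have "minner X Y = (\<Sum>i<n. (X * Y) $$ (i,i))"
    using assms unfolding minner_def mtrace_def by simp
  also have "\<dots> = trace_inner n X Y" unfolding trace_inner_def
    using assms by (intro sum.cong refl) (auto simp: scalar_prod_def col_def row_def atLeast0LessThan)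
  finally show ?thesis .
qed

lemma trace_inner_commute: "trace_inner n X Y = trace_inner n Y X"
  unfolding trace_inner_def by (subst sum.swap) (simp add: mult.commute)

lemma minner_commute:
  "X \<in> carrier_mat n n \<Longrightarrow> Y \<in> carrier_mat n n \<Longrightarrow> minner X Y = minner Y X"
  by (simp add: minner_eq_trace_inner trace_inner_commute)

lemma trace_inner_add_left:
  "X \<in> carrier_mat n n \<Longrightarrow> Y \<in> carrier_mat n n \<Longrightarrow> trace_inner n (X + Y) Z = trace_inner n X Z + trace_inner n Y Z"
  unfolding trace_inner_def by (simp add: distrib_right sum.distrib)

lemma trace_inner_diff_left:
  "X \<in> carrier_mat n n \<Longrightarrow> Y \<in> carrier_mat n n \<Longrightarrow> trace_inner n (X - Y) Z = trace_inner n X Z - trace_inner n Y Z"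
  unfolding trace_inner_def by (simp add: left_diff_distrib sum_subtractf)

lemma trace_inner_smult_left:
  "X \<in> carrier_mat n n \<Longrightarrow> trace_inner n (c \<cdot>\<^sub>m X) Z = c * trace_inner n X Z"
  unfolding trace_inner_def by (simp add: sum_distrib_left mult.assoc)

lemma trace_inner_add_right:
  "Y \<in> carrier_mat n n \<Longrightarrow> Z \<in> carrier_mat n n \<Longrightarrow> trace_inner n X (Y + Z) = trace_inner n X Y + trace_inner n X Z"
  by (simp add: trace_inner_commute[of n X] trace_inner_add_left)

lemma trace_inner_smult_right:
  "Y \<in> carrier_mat n n \<Longrightarrow> trace_inner n X (c \<cdot>\<^sub>m Y) = c * trace_inner n X Y"
  by (simp add: trace_inner_commute[of n X] trace_inner_smult_left)

lemma mlincomb_carrier [simp]: "mlincomb n m x A \<in> carrier_mat n n"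
  unfolding mlincomb_def by simp

lemma mlincomb_index:
  "a < n \<Longrightarrow> b < n \<Longrightarrow> mlincomb n m x A $$ (a,b) = (\<Sum>i<m. x i * A i $$ (a,b))"
  unfolding mlincomb_def by simp

lemma mlincomb_zero: "(\<forall>i<m. x i = 0) \<Longrightarrow> mlincomb n m x A = 0\<^sub>m n n"
  unfolding mlincomb_def by (intro eq_matI) auto

lemma trace_inner_mlincomb_left:
  "trace_inner n (mlincomb n m x A) Y = (\<Sum>i<m. x i * trace_inner n (A i) Y)"
  unfolding trace_inner_def
  by (simp add: mlincomb_index sum_distrib_left sum_distrib_right mult.assoc)
     (subst sum.swap, rule sum.cong, simp, subst sum.swap, simp)

lemma minner_add_left:
  assumes "X \<in> carrier_mat n n" "Y \<in> carrier_mat n n" "Z \<in> carrier_mat n n"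
  shows "minner (X + Y) Z = minner X Z + minner Y Z"
  using assms by (simp add: minner_eq_trace_inner[of _ n] trace_inner_add_left)

lemma minner_smult_right:
  assumes "X \<in> carrier_mat n n" "Y \<in> carrier_mat n n"
  shows "minner X (c \<cdot>\<^sub>m Y) = c * minner X Y"
  using assms by (simp add: minner_eq_trace_inner[of _ n] trace_inner_smult_right)

lemma sym_mats_carrier: "X \<in> sym_mats n \<Longrightarrow> X \<in> carrier_mat n n"
  unfolding sym_mats_def by auto

lemma sym_mats_index_swap: "X \<in> sym_mats n \<Longrightarrow> a < n \<Longrightarrow> b < n \<Longrightarrow> X $$ (a,b) = X $$ (b,a)"
  unfolding sym_mats_def by (metis (mono_tags, lifting) carrier_matD index_transpose_mat(1) mem_Collect_eq)

lemma sym_mats_add: "X \<in> sym_mats n \<Longrightarrow> Y \<in> sym_mats n \<Longrightarrow> X + Y \<in> sym_mats n"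
  unfolding sym_mats_def by (auto simp: transpose_add)

lemma sym_mats_smult: "X \<in> sym_mats n \<Longrightarrow> c \<cdot>\<^sub>m X \<in> sym_mats n"
  unfolding sym_mats_def by (auto intro!: eq_matI) (metis carrier_matD index_transpose_mat(1))

lemma one_mat_sym_mats: "1\<^sub>m n \<in> sym_mats n"
  unfolding sym_mats_def by auto

lemma mlincomb_sym_mats: "\<forall>i<m. A i \<in> sym_mats n \<Longrightarrow> mlincomb n m x A \<in> sym_mats n"
  unfolding sym_mats_def mlincomb_def
  by (auto intro!: eq_matI sum.cong) (metis carrier_matD index_transpose_mat(1))

lemma block_id_sym_mats: "block_id n r \<in> sym_mats n"
  unfolding sym_mats_def block_id_def by (auto intro!: eq_matI)

lemma trace_inner_block_id: "r \<le> n \<Longrightarrow> trace_inner n (block_id n r) Y = (\<Sum>a<r. Y $$ (a,a))"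
  unfolding trace_inner_def block_id_def
  by (simp add: if_distrib if_distribR cong: if_cong) (rule sum.mono_neutral_cong_right, auto)

lemma minner_sym_eq_trace_inner: "X \<in> sym_mats n \<Longrightarrow> Y \<in> carrier_mat n n \<Longrightarrow> minner X Y = trace_inner n X Y"
  using minner_eq_trace_inner sym_mats_carrier by blast

lemma trace_inner_self_eq_0:
  assumes "X \<in> sym_mats n" "trace_inner n X X = 0"
  shows "X = 0\<^sub>m n n"
proof -
  have sq: "trace_inner n X X = (\<Sum>a<n. \<Sum>b<n. (X $$ (a,b))^2)"
    unfolding trace_inner_def using sym_mats_index_swap[OF assms(1)]
    by (auto simp: power2_eq_square intro!: sum.cong)
  have "\<forall>a\<in>{..<n}. (\<Sum>b<n. (X $$ (a,b))^2) = 0"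
    using assms(2) unfolding sq by (subst sum_nonneg_eq_0_iff[symmetric]) (auto intro: sum_nonneg)
  hence "\<And>a b. a < n \<Longrightarrow> b < n \<Longrightarrow> X $$ (a,b) = 0"
    by (subst (asm) sum_nonneg_eq_0_iff) auto
  thus ?thesis using sym_mats_carrier[OF assms(1)] by (intro eq_matI) auto
qed

section \<open>Quadratic forms and the positive semidefinite cone\<close>

definition qform :: "nat \<Rightarrow> real mat \<Rightarrow> (nat \<Rightarrow> real) \<Rightarrow> real" where
  "qform n X v = (\<Sum>a<n. \<Sum>b<n. v a * X $$ (a,b) * v b)"

lemma scalar_prod_mult_mat_vec_eq_qform:
  assumes "X \<in> carrier_mat n n" "v \<in> carrier_vec n"
  shows "v \<bullet> (X *\<^sub>v v) = qform n X (\<lambda>i. v $ i)"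
  using assms unfolding qform_def
  by (auto simp: scalar_prod_def row_def atLeast0LessThan sum_distrib_left mult.assoc intro!: sum.cong)

lemma qform_add: "qform n (X + Y) v = qform n X v + qform n Y v"
  if "X \<in> carrier_mat n n" "Y \<in> carrier_mat n n"
  using that unfolding qform_def by (simp add: algebra_simps sum.distrib)

lemma qform_smult: "X \<in> carrier_mat n n \<Longrightarrow> qform n (c \<cdot>\<^sub>m X) v = c * qform n X v"
  unfolding qform_def by (simp add: algebra_simps sum_distrib_left)

lemma qform_one: "qform n (1\<^sub>m n) v = (\<Sum>a<n. v a * v a)"
  unfolding qform_def by (simp add: if_distrib if_distribR cong: if_cong)

lemma qform_add_unit_vector:
  assumes X: "X \<in> sym_mats n" and j: "j < n"
  shows "qform n X (\<lambda>a. v a + t * (if a = j then 1 else 0)) =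
     qform n X v + 2 * t * (\<Sum>b<n. X $$ (j,b) * v b) + t^2 * X $$ (j,j)"
proof -
  have col: "(\<Sum>a<n. v a * X $$ (a,j)) = (\<Sum>b<n. X $$ (j,b) * v b)"
    using sym_mats_index_swap[OF X _ j] by (auto simp: mult.commute intro!: sum.cong)
  have if_sum: "(\<Sum>b\<in>S. if P then f b else 0) = (if P then sum f S else (0::real))" for P S and f :: "nat \<Rightarrow> real"
    by (cases P) auto
  have if_conj_distrib: "(if P \<and> R then x else (0::real)) = (if P then (if R then x else 0) else 0)" for P R x
    by auto
  have "qform n X (\<lambda>a. v a + t * (if a = j then 1 else 0)) =
     (\<Sum>a<n. \<Sum>b<n. v a * X $$ (a,b) * v b + (if a = j then t * X $$ (j,b) * v b else 0)
        + (if b = j then t * v a * X $$ (a,j) else 0) + (if a = j \<and> b = j then t^2 * X $$ (j,j) else 0))"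
    unfolding qform_def by (intro sum.cong refl) (auto simp: algebra_simps power2_eq_square)
  also have "\<dots> = qform n X v + (\<Sum>a<n. \<Sum>b<n. (if a = j then t * X $$ (j,b) * v b else 0))
      + (\<Sum>a<n. \<Sum>b<n. (if b = j then t * v a * X $$ (a,j) else 0))
      + (\<Sum>a<n. \<Sum>b<n. (if a = j \<and> b = j then t^2 * X $$ (j,j) else 0))"
    unfolding qform_def by (simp only: sum.distrib)
  also have "(\<Sum>a<n. \<Sum>b<n. (if a = j then t * X $$ (j,b) * v b else 0)) = t * (\<Sum>b<n. X $$ (j,b) * v b)"
    using j by (simp only: if_sum) (simp add: sum_distrib_left mult.assoc)
  also have "(\<Sum>a<n. \<Sum>b<n. (if b = j then t * v a * X $$ (a,j) else 0)) = t * (\<Sum>a<n. v a * X $$ (a,j))"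
    using j by (simp add: sum_distrib_left mult.assoc)
  also have "(\<Sum>a<n. \<Sum>b<n. (if a = j \<and> b = j then t^2 * X $$ (j,j) else 0)) = t^2 * X $$ (j,j)"
    using j by (simp add: if_conj_distrib if_sum)
  finally show ?thesis unfolding col by simp
qed

lemma psd_cone_sym_mats: "X \<in> psd_cone n \<Longrightarrow> X \<in> sym_mats n"
  unfolding psd_cone_def by auto

lemma psd_cone_carrier: "X \<in> psd_cone n \<Longrightarrow> X \<in> carrier_mat n n"
  using psd_cone_sym_mats sym_mats_carrier by blast

lemma psd_cone_qform_nonneg: "X \<in> psd_cone n \<Longrightarrow> qform n X v \<ge> 0"
proof -
  assume X: "X \<in> psd_cone n"
  have "vec n v \<bullet> (X *\<^sub>v vec n v) \<ge> 0" using X unfolding psd_cone_def by auto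
  thus ?thesis using X psd_cone_carrier scalar_prod_mult_mat_vec_eq_qform[of X n "vec n v"]
    unfolding qform_def by simp
qed

lemma psd_coneI_qform:
  assumes X: "X \<in> sym_mats n" and nonneg: "\<And>v. qform n X v \<ge> 0"
  shows "X \<in> psd_cone n"
  unfolding psd_cone_def
  using X nonneg scalar_prod_mult_mat_vec_eq_qform[OF sym_mats_carrier[OF X]] by simp

lemma pos_def_iff_qform:
  "pos_def n X \<longleftrightarrow> X \<in> sym_mats n \<and> (\<forall>v. (\<exists>i<n. v i \<noteq> 0) \<longrightarrow> qform n X v > 0)"
proof
  assume X: "pos_def n X"
  have Xc: "X \<in> carrier_mat n n" using X sym_mats_carrier unfolding pos_def_def by auto
  show "X \<in> sym_mats n \<and> (\<forall>v. (\<exists>i<n. v i \<noteq> 0) \<longrightarrow> qform n X v > 0)"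
  proof (intro conjI allI impI)
    show "X \<in> sym_mats n" using X unfolding pos_def_def by auto
    fix v :: "nat \<Rightarrow> real" assume "\<exists>i<n. v i \<noteq> 0"
    hence "vec n v \<noteq> 0\<^sub>v n" by (metis index_vec index_zero_vec(1))
    hence "vec n v \<bullet> (X *\<^sub>v vec n v) > 0" using X unfolding pos_def_def by auto
    thus "qform n X v > 0" using scalar_prod_mult_mat_vec_eq_qform[OF Xc vec_carrier, of v]
      unfolding qform_def by simp
  qed
next
  assume X: "X \<in> sym_mats n \<and> (\<forall>v. (\<exists>i<n. v i \<noteq> 0) \<longrightarrow> qform n X v > 0)"
  show "pos_def n X" unfolding pos_def_def
  proof (intro conjI ballI impI)
    show "X \<in> sym_mats n" using X by auto
    fix v :: "real vec" assume v: "v \<in> carrier_vec n" "v \<noteq> 0\<^sub>v n"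
    have "\<exists>i<n. v $ i \<noteq> 0" using v by (metis carrier_vecD eq_vecI index_zero_vec(1) index_zero_vec(2))
    hence "qform n X (\<lambda>i. v $ i) > 0" using X by blast
    moreover have "X \<in> carrier_mat n n" using X sym_mats_carrier by blast
    ultimately show "v \<bullet> (X *\<^sub>v v) > 0"
      using scalar_prod_mult_mat_vec_eq_qform[OF _ v(1)] by simp
  qed
qed

lemma unit_vec_quadratic_form:
  fixes X :: "real mat"
  assumes "X \<in> carrier_mat n n" "a < n"
  shows "unit_vec n a \<bullet> (X *\<^sub>v unit_vec n a) = X $$ (a,a)"
  using scalar_prod_left_unit[of "X *\<^sub>v unit_vec n a" n a] assms by (simp add: scalar_prod_right_unit)

lemma psd_cone_diag_nonneg:
  assumes X: "X \<in> psd_cone n" and a: "a < n"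
  shows "X $$ (a,a) \<ge> 0"
proof -
  have "unit_vec n a \<bullet> (X *\<^sub>v unit_vec n a) \<ge> 0" using X unfolding psd_cone_def by simp
  thus ?thesis using unit_vec_quadratic_form[OF psd_cone_carrier[OF X] a] by simp
qed

lemma pos_def_diag_pos:
  assumes X: "pos_def n X" and a: "a < n"
  shows "X $$ (a,a) > 0"
proof -
  have Xc: "X \<in> carrier_mat n n" using X sym_mats_carrier unfolding pos_def_def by blast
  have "unit_vec n a \<noteq> 0\<^sub>v n" using a
    by (metis index_unit_vec(1) index_zero_vec(1) zero_neq_one)
  hence "unit_vec n a \<bullet> (X *\<^sub>v unit_vec n a) > 0"
    using X unit_vec_carrier[of n a] unfolding pos_def_def by blast
  thus ?thesis using unit_vec_quadratic_form[OF Xc a] by simp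
qed

lemma pos_def_psd_cone:
  assumes X: "pos_def n X"
  shows "X \<in> psd_cone n"
proof (rule psd_coneI_qform)
  show "X \<in> sym_mats n" using X unfolding pos_def_def by blast
  fix v
  show "qform n X v \<ge> 0"
  proof (cases "\<exists>i<n. v i \<noteq> 0")
    case True thus ?thesis using X unfolding pos_def_iff_qform by (simp add: less_imp_le)
  next
    case False thus ?thesis unfolding qform_def by simp
  qed
qed

lemma pos_def_add: "pos_def n X \<Longrightarrow> pos_def n Y \<Longrightarrow> pos_def n (X + Y)"
  unfolding pos_def_iff_qform by (auto simp: sym_mats_add qform_add sym_mats_carrier add_pos_pos)

lemma pos_def_smult: "pos_def n X \<Longrightarrow> r > 0 \<Longrightarrow> pos_def n (r \<cdot>\<^sub>m X)"
  unfolding pos_def_iff_qform by (auto simp: sym_mats_smult qform_smult sym_mats_carrier)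

lemma sum_squares_pos:
  fixes n :: nat
  assumes "\<exists>i<n. v i \<noteq> 0"
  shows "(\<Sum>a<n. v a * v a) > (0::real)"
proof -
  obtain i where i: "i < n" "v i \<noteq> 0" using assms by blast
  show ?thesis by (rule sum_pos2[of _ i]) (use i in \<open>auto simp: zero_less_mult_iff linorder_neq_iff\<close>)
qed

lemma pos_def_one_mat: "pos_def n (1\<^sub>m n)"
  unfolding pos_def_iff_qform qform_one using one_mat_sym_mats sum_squares_pos by blast

lemma psd_add_smult_one_pos_def:
  assumes X: "X \<in> psd_cone n" and e: "e > 0"
  shows "pos_def n (X + e \<cdot>\<^sub>m 1\<^sub>m n)"
  unfolding pos_def_iff_qform
proof (intro conjI allI impI)
  show "X + e \<cdot>\<^sub>m 1\<^sub>m n \<in> sym_mats n"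
    using X psd_cone_sym_mats sym_mats_add sym_mats_smult one_mat_sym_mats by blast
  fix v :: "nat \<Rightarrow> real" assume "\<exists>i<n. v i \<noteq> 0"
  hence "qform n X v + e * (\<Sum>a<n. v a * v a) > 0"
    using psd_cone_qform_nonneg[OF X, of v] sum_squares_pos e by (simp add: add_nonneg_pos)
  moreover have "qform n (X + e \<cdot>\<^sub>m 1\<^sub>m n) v = qform n X v + e * (\<Sum>a<n. v a * v a)"
    using psd_cone_carrier[OF X] by (simp add: qform_add qform_smult qform_one)
  ultimately show "qform n (X + e \<cdot>\<^sub>m 1\<^sub>m n) v > 0" by simp
qed

lemma block_id_psd_cone: "block_id n r \<in> psd_cone n"
proof (rule psd_coneI_qform[OF block_id_sym_mats])
  fix v
  show "qform n (block_id n r) v \<ge> 0"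
    unfolding qform_def block_id_def by (auto intro!: sum_nonneg)
qed

section \<open>Self-duality of the positive semidefinite cone\<close>

lemma psd_cone_row_eq_0_if_diag_eq_0:
  assumes X: "X \<in> psd_cone n" and j: "j < n" and djj: "X $$ (j,j) = 0" and b: "b < n"
  shows "X $$ (j,b) = 0"
proof -
  define x where "x = (\<lambda>b. X $$ (j,b))"
  define S where "S = (\<Sum>b<n. x b * x b)"
  have "S = 0"
  proof (rule ccontr)
    assume "S \<noteq> 0"
    hence Sp: "S > 0" unfolding S_def by (simp add: order_neq_le_trans sum_nonneg)
    define t where "t = - (qform n X x + 1) / (2 * S)"
    have "0 \<le> qform n X (\<lambda>a. x a + t * (if a = j then 1 else 0))"
      by (rule psd_cone_qform_nonneg[OF X])
    also have "\<dots> = qform n X x + 2 * t * S"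
      unfolding qform_add_unit_vector[OF psd_cone_sym_mats[OF X] j] djj S_def x_def by simp
    also have "\<dots> = -1" unfolding t_def using Sp by (simp add: field_simps)
    finally show False by simp
  qed
  thus ?thesis using b unfolding S_def x_def by (subst (asm) sum_nonneg_eq_0_iff) auto
qed

text \<open>One step of symmetric Gaussian elimination: the Schur complement that clears row and
  column \<open>j\<close>. If \<open>X $$ (j,j) = 0\<close> the division yields \<open>0\<close>, so the step is the identity; for
  positive semidefinite \<open>X\<close> this is harmless, since then row \<open>j\<close> vanishes anyway.\<close>

definition schur_step :: "nat \<Rightarrow> nat \<Rightarrow> real mat \<Rightarrow> real mat" where
  "schur_step n j X = mat n n (\<lambda>(a,b). X $$ (a,b) - X $$ (j,a) * X $$ (j,b) / X $$ (j,j))"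

lemma schur_step_sym_mats: "X \<in> sym_mats n \<Longrightarrow> schur_step n j X \<in> sym_mats n"
  unfolding sym_mats_def schur_step_def
  using sym_mats_index_swap by (auto intro!: eq_matI simp: mult.commute sym_mats_def)

lemma qform_schur_step:
  "qform n (schur_step n j X) v = qform n X v - (\<Sum>b<n. X $$ (j,b) * v b)^2 / X $$ (j,j)"
proof -
  have "qform n (schur_step n j X) v =
      (\<Sum>a<n. \<Sum>b<n. v a * X $$ (a,b) * v b - (v a * X $$ (j,a)) * (X $$ (j,b) * v b) / X $$ (j,j))"
    unfolding qform_def schur_step_def by (intro sum.cong refl) (auto simp: algebra_simps)
  also have "\<dots> = qform n X v - (\<Sum>a<n. v a * X $$ (j,a)) * (\<Sum>b<n. X $$ (j,b) * v b) / X $$ (j,j)"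
    unfolding qform_def
    by (simp add: sum_subtractf sum_divide_distrib sum_distrib_left sum_distrib_right) (subst sum.swap, simp)
  finally show ?thesis by (simp add: power2_eq_square mult.commute)
qed

lemma schur_step_psd_cone:
  assumes X: "X \<in> psd_cone n" and j: "j < n"
  shows "schur_step n j X \<in> psd_cone n"
proof (rule psd_coneI_qform)
  show "schur_step n j X \<in> sym_mats n" using X psd_cone_sym_mats schur_step_sym_mats by blast
  fix v
  define d where "d = X $$ (j,j)"
  define s where "s = (\<Sum>b<n. X $$ (j,b) * v b)"
  have "d \<ge> 0" unfolding d_def using psd_cone_diag_nonneg[OF X j] .
  moreover have "qform n X v - s^2 / d \<ge> 0"
  proof (cases "d = 0")
    case True thus ?thesis using psd_cone_qform_nonneg[OF X] by simp
  next
    case False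
    have "0 \<le> qform n X (\<lambda>a. v a + (- s / d) * (if a = j then 1 else 0))"
      by (rule psd_cone_qform_nonneg[OF X])
    also have "\<dots> = qform n X v - s^2 / d"
      unfolding qform_add_unit_vector[OF psd_cone_sym_mats[OF X] j] s_def[symmetric] d_def[symmetric]
      using False by (simp add: field_simps power2_eq_square)
    finally show ?thesis .
  qed
  ultimately show "qform n (schur_step n j X) v \<ge> 0"
    unfolding qform_schur_step s_def d_def by simp
qed

lemma schur_step_row_eq_0:
  assumes X: "X \<in> psd_cone n" and j: "j < n" and b: "b < n"
  shows "schur_step n j X $$ (j,b) = 0"
  using psd_cone_row_eq_0_if_diag_eq_0[OF X j _ b] j b by (cases "X $$ (j,j) = 0") (auto simp: schur_step_def)

lemma trace_inner_schur_step:
  "trace_inner n W X = trace_inner n W (schur_step n j X) + qform n W (\<lambda>b. X $$ (j,b)) / X $$ (j,j)"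
proof -
  have "trace_inner n W X = (\<Sum>a<n. \<Sum>b<n. W $$ (a,b) * schur_step n j X $$ (b,a)
      + X $$ (j,a) * W $$ (a,b) * X $$ (j,b) / X $$ (j,j))"
    unfolding trace_inner_def schur_step_def by (intro sum.cong refl) (auto simp: algebra_simps)
  thus ?thesis unfolding trace_inner_def qform_def by (simp add: sum.distrib sum_divide_distrib)
qed

text \<open>Induction on the number \<open>j\<close> of leading rows and columns of \<open>X\<close> known to vanish; each
  Schur step clears one more while splitting off a term \<open>qform W x / d \<ge> 0\<close>.\<close>

lemma psd_cone_trace_inner_nonneg_aux:
  assumes W: "W \<in> psd_cone n" and X: "X \<in> psd_cone n" and j: "j \<le> n"
    and zero: "\<And>a b. a < n \<Longrightarrow> b < n \<Longrightarrow> a < j \<or> b < j \<Longrightarrow> X $$ (a,b) = 0"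
  shows "trace_inner n W X \<ge> 0"
  using j X zero
proof (induction j arbitrary: X rule: inc_induct)
  case base
  show ?case unfolding trace_inner_def using base.prems(2) by simp
next
  case (step j)
  have jn: "j < n" using step.hyps by simp
  have Xs: "X \<in> sym_mats n" using step.prems(1) psd_cone_sym_mats by blast
  let ?Y = "schur_step n j X"
  have "?Y $$ (a,b) = 0" if ab: "a < n" "b < n" "a < Suc j \<or> b < Suc j" for a b
  proof (cases "a < j \<or> b < j")
    case True
    have "X $$ (j,a) = 0 \<or> X $$ (j,b) = 0"
      using True ab step.prems(2) sym_mats_index_swap[OF Xs] jn by metis
    thus ?thesis using True ab step.prems(2) by (auto simp: schur_step_def)
  next
    case False
    hence "a = j \<or> b = j" using ab by auto
    moreover have "?Y \<in> sym_mats n" using schur_step_sym_mats[OF Xs] .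
    ultimately show ?thesis
      using schur_step_row_eq_0[OF step.prems(1) jn] ab sym_mats_index_swap by metis
  qed
  hence "trace_inner n W ?Y \<ge> 0"
    using step.IH schur_step_psd_cone[OF step.prems(1) jn] by blast
  moreover have "qform n W (\<lambda>b. X $$ (j,b)) / X $$ (j,j) \<ge> 0"
    using psd_cone_qform_nonneg[OF W] psd_cone_diag_nonneg[OF step.prems(1) jn] by simp
  ultimately show ?case unfolding trace_inner_schur_step[of n W X j] by simp
qed

lemma psd_cone_trace_inner_nonneg: "W \<in> psd_cone n \<Longrightarrow> X \<in> psd_cone n \<Longrightarrow> trace_inner n W X \<ge> 0"
  using psd_cone_trace_inner_nonneg_aux[of W n X 0] by simp

lemma psd_cone_subset_dual_cone: "psd_cone n \<subseteq> dual_cone n (psd_cone n)"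
proof
  fix W assume W: "W \<in> psd_cone n"
  have "minner W X \<ge> 0" if X: "X \<in> psd_cone n" for X
    using psd_cone_trace_inner_nonneg[OF W X]
    by (simp add: minner_eq_trace_inner[OF psd_cone_carrier[OF W] psd_cone_carrier[OF X]])
  thus "W \<in> dual_cone n (psd_cone n)" unfolding dual_cone_def using W psd_cone_sym_mats by blast
qed

section \<open>Separation of convex cones\<close>

definition sublinear :: "((nat \<Rightarrow> real) \<Rightarrow> real) \<Rightarrow> bool" where
  "sublinear p \<longleftrightarrow> (\<forall>u v. p (\<lambda>i. u i + v i) \<le> p u + p v) \<and> (\<forall>u r. r > 0 \<longrightarrow> p (\<lambda>i. r * u i) = r * p u)"

text \<open>The one-dimensional step of the Hahn-Banach theorem: the value \<open>c\<close> of the extension on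
  the new coordinate is squeezed between \<open>Sup L\<close> and \<open>Inf U\<close>.\<close>

lemma sublinear_dominated_extension:
  assumes p: "sublinear p"
    and w: "\<And>u. (\<forall>i\<ge>N. u i = 0) \<Longrightarrow> (\<Sum>i<N. w i * u i) \<le> p u"
  shows "\<exists>c. \<forall>u. (\<forall>i\<ge>Suc N. u i = 0) \<longrightarrow> (\<Sum>i<Suc N. (w(N := c)) i * u i) \<le> p u"
proof -
  have sub: "p (\<lambda>i. u i + v i) \<le> p u + p v" and hom: "r > 0 \<Longrightarrow> p (\<lambda>i. r * u i) = r * p u" for u v r
    using p unfolding sublinear_def by blast+
  define l where "l = (\<lambda>u. \<Sum>i<N. w i * u i)"
  define e where "e = (\<lambda>i::nat. if i = N then 1 else (0::real))"
  define L where "L = {l u - p (\<lambda>i. u i - e i) | u. \<forall>i\<ge>N. u i = 0}"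
  define U where "U = {p (\<lambda>i. v i + e i) - l v | v. \<forall>i\<ge>N. v i = 0}"
  have LU: "x \<le> y" if xL: "x \<in> L" and yU: "y \<in> U" for x y
  proof -
    obtain u where u: "x = l u - p (\<lambda>i. u i - e i)" "\<forall>i\<ge>N. u i = 0" using xL unfolding L_def by blast
    obtain v where v: "y = p (\<lambda>i. v i + e i) - l v" "\<forall>i\<ge>N. v i = 0" using yU unfolding U_def by blast
    have "l u + l v = l (\<lambda>i. u i + v i)" unfolding l_def by (simp add: sum.distrib algebra_simps)
    also have "\<dots> \<le> p (\<lambda>i. u i + v i)" unfolding l_def using u(2) v(2) by (intro w) auto
    also have "(\<lambda>i. u i + v i) = (\<lambda>i. (u i - e i) + (v i + e i))" by auto
    also have "p \<dots> \<le> p (\<lambda>i. u i - e i) + p (\<lambda>i. v i + e i)" by (rule sub)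
    finally show ?thesis using u(1) v(1) by simp
  qed
  have L0: "l (\<lambda>i. 0) - p (\<lambda>i. (\<lambda>i. 0) i - e i) \<in> L" unfolding L_def by blast
  have U0: "p (\<lambda>i. (\<lambda>i. 0) i + e i) - l (\<lambda>i. 0) \<in> U"
    unfolding U_def by (intro CollectI exI[of _ "\<lambda>i. 0"]) auto
  have Lbdd: "bdd_above L" using LU[OF _ U0] by (intro bdd_aboveI) auto
  define c where "c = Sup L"
  have upL: "x \<le> c" if "x \<in> L" for x unfolding c_def using cSup_upper[OF that Lbdd] .
  have lowU: "c \<le> y" if "y \<in> U" for y unfolding c_def using cSup_least[of L] L0 LU that by blast
  have "\<forall>u. (\<forall>i\<ge>Suc N. u i = 0) \<longrightarrow> (\<Sum>i<Suc N. (w(N := c)) i * u i) \<le> p u"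
  proof (intro allI impI)
    fix u :: "nat \<Rightarrow> real" assume u: "\<forall>i\<ge>Suc N. u i = 0"
    define u0 where "u0 = (\<lambda>i. if i < N then u i else 0)"
    define s where "s = u N"
    have u0: "\<forall>i\<ge>N. u0 i = 0" unfolding u0_def by auto
    have decomp: "u = (\<lambda>i. u0 i + s * e i)" using u unfolding u0_def s_def e_def
      by (auto simp: fun_eq_iff)
    have sum_eq: "(\<Sum>i<Suc N. (w(N := c)) i * u i) = l u0 + c * s"
      unfolding l_def u0_def s_def by (auto intro!: sum.cong)
    show "(\<Sum>i<Suc N. (w(N := c)) i * u i) \<le> p u"
    proof (cases s "0::real" rule: linorder_cases)
      case equal
      hence "u = u0" using decomp by simp
      thus ?thesis using sum_eq equal w[OF u0] unfolding l_def by auto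
    next
      case greater
      define v where "v = (\<lambda>i. u0 i / s)"
      have v: "\<forall>i\<ge>N. v i = 0" using u0 unfolding v_def by auto
      have "c \<le> p (\<lambda>i. v i + e i) - l v" using lowU v unfolding U_def by blast
      hence "s * c \<le> s * p (\<lambda>i. v i + e i) - s * l v" using greater
        by (metis mult_le_cancel_left_pos right_diff_distrib)
      also have "s * p (\<lambda>i. v i + e i) = p (\<lambda>i. s * (v i + e i))" using hom greater by simp
      also have "(\<lambda>i. s * (v i + e i)) = u" using decomp greater unfolding v_def by (auto simp: field_simps)
      also have "s * l v = l u0" unfolding l_def v_def using greater
        by (simp add: sum_distrib_left field_simps)
      finally show ?thesis using sum_eq by (simp add: mult.commute)
    next
      case less
      define r where "r = - s"
      have r: "r > 0" using less unfolding r_def by simp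
      define v where "v = (\<lambda>i. u0 i / r)"
      have v: "\<forall>i\<ge>N. v i = 0" using u0 unfolding v_def by auto
      have "l v - p (\<lambda>i. v i - e i) \<le> c" using upL v unfolding L_def by blast
      hence "r * l v - r * p (\<lambda>i. v i - e i) \<le> r * c" using r
        by (metis mult_le_cancel_left_pos right_diff_distrib)
      also have "r * p (\<lambda>i. v i - e i) = p (\<lambda>i. r * (v i - e i))" using hom r by simp
      also have "(\<lambda>i. r * (v i - e i)) = u" using decomp r unfolding v_def r_def by (auto simp: field_simps)
      also have "r * l v = l u0" unfolding l_def v_def using r
        by (simp add: sum_distrib_left field_simps)
      finally show ?thesis using sum_eq unfolding r_def by (simp add: algebra_simps)
    qed
  qed
  thus ?thesis by (rule exI[of _ c])
qed

lemma sublinear_dominates_linear: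
  assumes p: "sublinear p"
  shows "\<exists>w. \<forall>u. (\<forall>i\<ge>N. u i = 0) \<longrightarrow> (\<Sum>i<N. w i * u i) \<le> p u"
proof (induction N)
  case 0
  have "p (\<lambda>i. 2 * 0) = 2 * p (\<lambda>i. 0)" using p unfolding sublinear_def by (meson zero_less_numeral)
  hence p0: "p (\<lambda>i. 0) = 0" by simp
  show ?case
  proof (intro exI allI impI)
    fix u :: "nat \<Rightarrow> real" assume "\<forall>i\<ge>0. u i = 0"
    hence "u = (\<lambda>i. 0)" by auto
    thus "(\<Sum>i<0. (\<lambda>_. 0) i * u i) \<le> p u" using p0 by simp
  qed
next
  case (Suc N)
  then obtain w where "\<And>u. (\<forall>i\<ge>N. u i = 0) \<Longrightarrow> (\<Sum>i<N. w i * u i) \<le> p u" by blast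
  from sublinear_dominated_extension[OF p this] obtain c
    where "\<forall>u. (\<forall>i\<ge>Suc N. u i = 0) \<longrightarrow> (\<Sum>i<Suc N. (w(N := c)) i * u i) \<le> p u" ..
  thus ?case by blast
qed

lemma Inf_sublinear:
  fixes T :: "(nat \<Rightarrow> real) \<Rightarrow> real set"
  assumes ne: "\<And>u. T u \<noteq> {}"
    and add: "\<And>t s u v. t \<in> T u \<Longrightarrow> s \<in> T v \<Longrightarrow> t + s \<in> T (\<lambda>i. u i + v i)"
    and scal: "\<And>t u r. t \<in> T u \<Longrightarrow> r > 0 \<Longrightarrow> r * t \<in> T (\<lambda>i. r * u i)"
    and zero: "\<And>t. t \<in> T (\<lambda>i. 0) \<Longrightarrow> t \<ge> 0"
  shows "(\<forall>u. bdd_below (T u)) \<and> sublinear (\<lambda>u. Inf (T u))"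
proof -
  have bdd: "bdd_below (T u)" for u
  proof -
    obtain s where s: "s \<in> T (\<lambda>i. - u i)" using ne by blast
    have "t \<ge> - s" if "t \<in> T u" for t
    proof -
      have "t + s \<in> T (\<lambda>i. u i + - u i)" by (rule add[OF that s])
      hence "t + s \<in> T (\<lambda>i. 0)" by simp
      thus ?thesis using zero by fastforce
    qed
    thus ?thesis by (intro bdd_belowI) auto
  qed
  define g where "g = (\<lambda>u. Inf (T u))"
  have lower: "t \<in> T u \<Longrightarrow> g u \<le> t" for t u unfolding g_def by (rule cInf_lower[OF _ bdd])
  have greatest: "(\<And>t. t \<in> T u \<Longrightarrow> x \<le> t) \<Longrightarrow> x \<le> g u" for x u
    unfolding g_def by (rule cInf_greatest[OF ne])
  have "g (\<lambda>i. u i + v i) \<le> g u + g v" for u v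
  proof -
    have "g (\<lambda>i. u i + v i) - s \<le> g u" if s: "s \<in> T v" for s
    proof (rule greatest)
      fix t assume "t \<in> T u"
      from lower[OF add[OF this s]] show "g (\<lambda>i. u i + v i) - s \<le> t" by simp
    qed
    hence "g (\<lambda>i. u i + v i) - g u \<le> g v"
      by (intro greatest) (metis add.commute diff_le_eq)
    thus ?thesis by simp
  qed
  moreover have "g (\<lambda>i. r * u i) = r * g u" if r: "r > 0" for u r
  proof (rule antisym)
    have "g (\<lambda>i. r * u i) / r \<le> t" if "t \<in> T u" for t
      using lower[OF scal[OF that r]] r by (simp add: field_simps)
    hence "g (\<lambda>i. r * u i) / r \<le> g u" using greatest by blast
    thus "g (\<lambda>i. r * u i) \<le> r * g u" using r by (simp add: field_simps)
  next
    have "r * g u \<le> t" if t: "t \<in> T (\<lambda>i. r * u i)" for t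
    proof -
      have "(1/r) * t \<in> T (\<lambda>i. (1/r) * (r * u i))" using scal[OF t, of "1/r"] r by simp
      moreover have "(\<lambda>i. (1/r) * (r * u i)) = u" using r by auto
      ultimately have "t / r \<in> T u" by simp
      hence "g u \<le> t / r" by (rule lower)
      thus ?thesis using r by (simp add: field_simps)
    qed
    thus "r * g u \<le> g (\<lambda>i. r * u i)" using greatest by blast
  qed
  ultimately show ?thesis using bdd unfolding sublinear_def g_def by blast
qed

definition extend_coord :: "nat \<Rightarrow> (nat \<Rightarrow> real) \<Rightarrow> real \<Rightarrow> nat \<Rightarrow> real" where
  "extend_coord N u t = (\<lambda>i. if i < N then u i else if i = N then t else 0)"

text \<open>If a convex cone in \<open>\<real>\<^sup>N\<^sup>+\<^sup>1\<close> meets every vertical line but misses the point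
  \<open>(0, \<dots>, 0, -\<sigma>)\<close>, then \<open>u \<mapsto> inf {\<sigma> t. (u, t) \<in> C}\<close> is a finite sublinear function on \<open>\<real>\<^sup>N\<close>;
  a linear minorant from Hahn-Banach gives the separating functional.\<close>

lemma convex_cone_below_last_coord:
  fixes C :: "(nat \<Rightarrow> real) set" and \<sigma> :: real
  assumes sub: "\<forall>u\<in>C. \<forall>i\<ge>Suc N. u i = 0"
    and add: "\<forall>u\<in>C. \<forall>v\<in>C. (\<lambda>i. u i + v i) \<in> C"
    and scal: "\<forall>u\<in>C. \<forall>r>0. (\<lambda>i. r * u i) \<in> C"
    and fibres: "\<And>u. \<exists>t. extend_coord N u t \<in> C"
    and \<sigma>: "\<sigma> * \<sigma> = 1" and miss: "extend_coord N (\<lambda>i. 0) (- \<sigma>) \<notin> C"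
  shows "\<exists>w. \<forall>c\<in>C. (\<Sum>i<N. w i * c i) \<le> \<sigma> * c N"
proof -
  define T where "T = (\<lambda>u. {t. extend_coord N u (\<sigma> * t) \<in> C})"
  have "T u \<noteq> {}" for u
  proof -
    obtain t where "extend_coord N u t \<in> C" using fibres by blast
    hence "\<sigma> * t \<in> T u" unfolding T_def using \<sigma> by (simp add: mult.assoc[symmetric])
    thus ?thesis by auto
  qed
  moreover have "t + s \<in> T (\<lambda>i. u i + v i)" if "t \<in> T u" "s \<in> T v" for t s u v
  proof -
    have "(\<lambda>i. extend_coord N u (\<sigma> * t) i + extend_coord N v (\<sigma> * s) i) \<in> C"
      using add that unfolding T_def by blast
    moreover have "(\<lambda>i. extend_coord N u (\<sigma> * t) i + extend_coord N v (\<sigma> * s) i) =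
        extend_coord N (\<lambda>i. u i + v i) (\<sigma> * (t + s))"
      unfolding extend_coord_def by (auto simp: distrib_left)
    ultimately show ?thesis unfolding T_def by simp
  qed
  moreover have "r * t \<in> T (\<lambda>i. r * u i)" if "t \<in> T u" "r > 0" for t u r
  proof -
    have "(\<lambda>i. r * extend_coord N u (\<sigma> * t) i) \<in> C" using scal that unfolding T_def by blast
    moreover have "(\<lambda>i. r * extend_coord N u (\<sigma> * t) i) = extend_coord N (\<lambda>i. r * u i) (\<sigma> * (r * t))"
      unfolding extend_coord_def by (auto simp: mult.left_commute)
    ultimately show ?thesis unfolding T_def by simp
  qed
  moreover have "t \<ge> 0" if t: "t \<in> T (\<lambda>i. 0)" for t
  proof (rule ccontr)
    assume "\<not> t \<ge> 0"
    hence "(\<lambda>i. (- 1 / t) * extend_coord N (\<lambda>i. 0) (\<sigma> * t) i) \<in> C"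
      using t unfolding T_def by (intro scal[rule_format]) auto
    moreover have "(\<lambda>i. (- 1 / t) * extend_coord N (\<lambda>i. 0) (\<sigma> * t) i) = extend_coord N (\<lambda>i. 0) (- \<sigma>)"
      using \<open>\<not> t \<ge> 0\<close> unfolding extend_coord_def by auto
    ultimately show False using miss by simp
  qed
  ultimately have "(\<forall>u. bdd_below (T u)) \<and> sublinear (\<lambda>u. Inf (T u))" by (rule Inf_sublinear)
  hence bdd: "\<And>u. bdd_below (T u)" and g: "sublinear (\<lambda>u. Inf (T u))" by auto
  obtain w where w: "\<forall>u. (\<forall>i\<ge>N. u i = 0) \<longrightarrow> (\<Sum>i<N. w i * u i) \<le> Inf (T u)"
    using sublinear_dominates_linear[OF g] by blast
  have "(\<Sum>i<N. w i * c i) \<le> \<sigma> * c N" if c: "c \<in> C" for c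
  proof -
    define u where "u = (\<lambda>i. if i < N then c i else 0)"
    have "\<forall>i\<ge>N. u i = 0" unfolding u_def by simp
    hence "(\<Sum>i<N. w i * u i) \<le> Inf (T u)" using w by blast
    moreover have "extend_coord N u (\<sigma> * (\<sigma> * c N)) = c"
      using c sub \<sigma> unfolding extend_coord_def u_def by (auto simp: fun_eq_iff mult.assoc[symmetric])
    hence "\<sigma> * c N \<in> T u" unfolding T_def using c by simp
    hence "Inf (T u) \<le> \<sigma> * c N" by (rule cInf_lower[OF _ bdd])
    moreover have "(\<Sum>i<N. w i * u i) = (\<Sum>i<N. w i * c i)" unfolding u_def by simp
    ultimately show ?thesis by simp
  qed
  thus ?thesis by blast
qed

lemma convex_cone_full_if_fibres_and_axis:
  fixes C :: "(nat \<Rightarrow> real) set"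
  assumes add: "\<forall>u\<in>C. \<forall>v\<in>C. (\<lambda>i. u i + v i) \<in> C"
    and scal: "\<forall>u\<in>C. \<forall>r>0. (\<lambda>i. r * u i) \<in> C"
    and fibres: "\<And>u. \<exists>t. extend_coord N u t \<in> C"
    and axis: "extend_coord N (\<lambda>i. 0) 1 \<in> C" "extend_coord N (\<lambda>i. 0) (- 1) \<in> C"
    and v: "\<forall>i\<ge>Suc N. v i = 0"
  shows "v \<in> C"
proof -
  obtain t where t: "extend_coord N v t \<in> C" using fibres by blast
  define d where "d = v N - t"
  have v_eq: "v = (\<lambda>i. extend_coord N v t i + \<bar>d\<bar> * extend_coord N (\<lambda>i. 0) (sgn d) i)"
    using v unfolding extend_coord_def d_def by (auto simp: fun_eq_iff abs_mult_sgn)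
  show ?thesis
  proof (cases "d = 0")
    case True thus ?thesis using t v_eq by simp
  next
    case False
    have "extend_coord N (\<lambda>i. 0) (sgn d) \<in> C" using axis False by (cases "d > 0") (auto simp: sgn_if)
    hence "(\<lambda>i. \<bar>d\<bar> * extend_coord N (\<lambda>i. 0) (sgn d) i) \<in> C" using scal False by simp
    hence "(\<lambda>i. extend_coord N v t i + \<bar>d\<bar> * extend_coord N (\<lambda>i. 0) (sgn d) i) \<in> C"
      by (rule add[rule_format, OF t])
    thus ?thesis using v_eq by simp
  qed
qed

text \<open>Induction on \<open>N\<close>: either the projection of the cone to the first \<open>N - 1\<close> coordinates
  is already proper, or every vertical line meets the cone.\<close>

lemma convex_cone_in_halfspace:
  fixes C :: "(nat \<Rightarrow> real) set"
  assumes sub: "\<forall>u\<in>C. \<forall>i\<ge>N. u i = 0"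
    and add: "\<forall>u\<in>C. \<forall>v\<in>C. (\<lambda>i. u i + v i) \<in> C"
    and scal: "\<forall>u\<in>C. \<forall>r>0. (\<lambda>i. r * u i) \<in> C"
    and ne: "C \<noteq> {}"
    and proper: "\<exists>v. (\<forall>i\<ge>N. v i = 0) \<and> v \<notin> C"
  shows "\<exists>a. (\<exists>i<N. a i \<noteq> 0) \<and> (\<forall>u\<in>C. (\<Sum>i<N. a i * u i) \<ge> 0)"
  using assms
proof (induction N arbitrary: C)
  case 0
  have "\<forall>u\<in>C. u = (\<lambda>i. 0)" using "0.prems"(1) by (auto simp: fun_eq_iff)
  moreover obtain v where "\<forall>i\<ge>0. v i = 0" "v \<notin> C" using "0.prems"(5) by blast
  moreover from this(1) have "v = (\<lambda>i. 0)" by (auto simp: fun_eq_iff)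
  ultimately show ?case using "0.prems"(4) by auto
next
  case (Suc N)
  note sub = Suc.prems(1) and add = Suc.prems(2) and scal = Suc.prems(3) and ne = Suc.prems(4)
  define pr where "pr = (\<lambda>u::nat\<Rightarrow>real. \<lambda>i. if i < N then u i else 0)"
  show ?case
  proof (cases "\<exists>v. (\<forall>i\<ge>N. v i = 0) \<and> v \<notin> pr ` C")
    case True
    have "\<forall>u\<in>pr ` C. \<forall>v\<in>pr ` C. (\<lambda>i. u i + v i) \<in> pr ` C"
    proof (intro ballI)
      fix u v assume "u \<in> pr ` C" "v \<in> pr ` C"
      then obtain u' v' where "u' \<in> C" "v' \<in> C" "u = pr u'" "v = pr v'" by auto
      hence "(\<lambda>i. u i + v i) = pr (\<lambda>i. u' i + v' i)" unfolding pr_def by auto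
      thus "(\<lambda>i. u i + v i) \<in> pr ` C" using add \<open>u' \<in> C\<close> \<open>v' \<in> C\<close> by auto
    qed
    moreover have "\<forall>u\<in>pr ` C. \<forall>r>0. (\<lambda>i. r * u i) \<in> pr ` C"
    proof (intro ballI allI impI)
      fix u r assume "u \<in> pr ` C" "(r::real) > 0"
      then obtain u' where "u' \<in> C" "u = pr u'" by auto
      hence "(\<lambda>i. r * u i) = pr (\<lambda>i. r * u' i)" unfolding pr_def by auto
      thus "(\<lambda>i. r * u i) \<in> pr ` C" using scal \<open>u' \<in> C\<close> \<open>r > 0\<close> by auto
    qed
    moreover have "\<forall>u\<in>pr ` C. \<forall>i\<ge>N. u i = 0" unfolding pr_def by auto
    ultimately obtain a where a: "\<exists>i<N. a i \<noteq> 0" "\<forall>u\<in>pr ` C. (\<Sum>i<N. a i * u i) \<ge> 0"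
      using Suc.IH[of "pr ` C"] True ne by blast
    show ?thesis
    proof (intro exI[of _ "\<lambda>i. if i < N then a i else 0"] conjI ballI)
      show "\<exists>i<Suc N. (if i < N then a i else 0) \<noteq> 0" using a(1) by auto
      fix u assume "u \<in> C"
      hence "(\<Sum>i<N. a i * pr u i) \<ge> 0" using a(2) by auto
      thus "(\<Sum>i<Suc N. (if i < N then a i else 0) * u i) \<ge> 0" unfolding pr_def by simp
    qed
  next
    case False
    hence onto: "\<forall>v. (\<forall>i\<ge>N. v i = 0) \<longrightarrow> v \<in> pr ` C" by blast
    have fibres: "\<exists>t. extend_coord N u t \<in> C" for u
    proof -
      have "pr u \<in> pr ` C" using onto unfolding pr_def by auto
      then obtain c where c: "c \<in> C" "pr u = pr c" by auto
      have "extend_coord N u (c N) = c"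
        using c sub unfolding extend_coord_def pr_def by (auto simp: fun_eq_iff) (metis not_less_eq_eq)
      thus ?thesis using c(1) by metis
    qed
    have axis: "extend_coord N (\<lambda>i. 0) (- 1) \<notin> C \<or> extend_coord N (\<lambda>i. 0) 1 \<notin> C"
      using convex_cone_full_if_fibres_and_axis[OF add scal fibres] Suc.prems(5) by blast
    obtain \<sigma> :: real where \<sigma>: "\<sigma> = 1 \<or> \<sigma> = - 1" "extend_coord N (\<lambda>i. 0) (- \<sigma>) \<notin> C"
    proof (cases "extend_coord N (\<lambda>i. 0) (- 1) \<in> C")
      case True thus ?thesis using axis that[of "- 1"] by simp
    next
      case False thus ?thesis using that[of 1] by simp
    qed
    have "\<sigma> * \<sigma> = 1" using \<sigma>(1) by auto
    from convex_cone_below_last_coord[OF sub add scal fibres this \<sigma>(2)]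
    obtain w where w: "\<forall>c\<in>C. (\<Sum>i<N. w i * c i) \<le> \<sigma> * c N" by blast
    show ?thesis
    proof (intro exI[of _ "\<lambda>i. if i < N then - w i else if i = N then \<sigma> else 0"] conjI ballI)
      show "\<exists>i<Suc N. (if i < N then - w i else if i = N then \<sigma> else 0) \<noteq> 0"
        using \<sigma>(1) by (intro exI[of _ N]) auto
      fix c assume "c \<in> C"
      thus "(\<Sum>i<Suc N. (if i < N then - w i else if i = N then \<sigma> else 0) * c i) \<ge> 0"
        using w by (simp add: sum_negf)
    qed
  qed
qed

section \<open>Facial reduction sequences\<close>

definition facial_reduction_seq ::
    "nat \<Rightarrow> real mat set \<Rightarrow> real mat set \<Rightarrow> (nat \<Rightarrow> real mat) \<Rightarrow> nat \<Rightarrow> bool" where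
  "facial_reduction_seq n K H ys k \<longleftrightarrow>
     (\<forall>i<k. ys i \<in> dual_cone n (face_chain K ys i) \<inter> orth n H) \<and>
     face_chain K ys k = min_face K (H \<inter> K)"

lemma facial_reduction_in_iff_seq: "facial_reduction_in n K H k \<longleftrightarrow> (\<exists>ys. facial_reduction_seq n K H ys k)"
  unfolding facial_reduction_in_def facial_reduction_seq_def ..

definition nontrivial_steps :: "real mat set \<Rightarrow> (nat \<Rightarrow> real mat) \<Rightarrow> nat \<Rightarrow> bool" where
  "nontrivial_steps K ys k \<longleftrightarrow> (\<forall>i<k. \<exists>X\<in>face_chain K ys i. minner (ys i) X \<noteq> 0)"

lemma face_chain_antimono: "i \<le> j \<Longrightarrow> face_chain K ys j \<subseteq> face_chain K ys i"
  by (induction j rule: dec_induct) auto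

lemma face_chain_subset: "face_chain K ys j \<subseteq> K"
  using face_chain_antimono[of 0 j K ys] by simp

lemma face_chain_orth: "i < j \<Longrightarrow> X \<in> face_chain K ys j \<Longrightarrow> minner (ys i) X = 0"
  using face_chain_antimono[of "Suc i" j K ys] by auto

lemma dual_cone_antimono: "F \<subseteq> G \<Longrightarrow> dual_cone n G \<subseteq> dual_cone n F"
  unfolding dual_cone_def by auto

text \<open>In a vanishing combination, the last nonzero coefficient is detected on its own face, where
  all earlier functionals vanish.\<close>

lemma nontrivial_steps_lin_indep:
  assumes steps: "nontrivial_steps K ys k"
    and rel: "\<forall>X\<in>K. (\<Sum>i<k. c i * minner (ys i) X) = 0"
  shows "\<forall>i<k. c i = 0"
proof (rule ccontr)
  assume "\<not> (\<forall>i<k. c i = 0)"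
  define J where "J = {i. i < k \<and> c i \<noteq> 0}"
  have J: "finite J" "J \<noteq> {}" using \<open>\<not> (\<forall>i<k. c i = 0)\<close> unfolding J_def by auto
  define j where "j = Max J"
  have jJ: "j \<in> J" and jmax: "\<And>i. i \<in> J \<Longrightarrow> i \<le> j" unfolding j_def using J by simp_all
  obtain X where X: "X \<in> face_chain K ys j" "minner (ys j) X \<noteq> 0"
    using steps jJ unfolding nontrivial_steps_def J_def by auto
  have rest: "c i * minner (ys i) X = 0" if "i \<in> {..<k} - {j}" for i
  proof (cases "i < j")
    case True thus ?thesis using face_chain_orth[OF True X(1)] by simp
  next
    case False
    hence "i \<notin> J" using jmax that by force
    thus ?thesis using that unfolding J_def by auto
  qed
  have "(\<Sum>i<k. c i * minner (ys i) X) = c j * minner (ys j) X + (\<Sum>i\<in>{..<k} - {j}. c i * minner (ys i) X)"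
    using jJ unfolding J_def by (subst sum.remove[of _ j]) auto
  also have "(\<Sum>i\<in>{..<k} - {j}. c i * minner (ys i) X) = 0" using rest by (intro sum.neutral) blast
  finally have "(\<Sum>i<k. c i * minner (ys i) X) = c j * minner (ys j) X" by simp
  moreover have "X \<in> K" using X(1) face_chain_subset by blast
  ultimately have "c j * minner (ys j) X = 0" using rel by auto
  thus False using X(2) jJ unfolding J_def by auto
qed

lemma facial_reduction_drop_trivial_step:
  assumes fr: "facial_reduction_seq n K H ys (Suc k)"
    and p: "p \<le> k" and trivial: "face_chain K ys (Suc p) = face_chain K ys p"
  shows "facial_reduction_in n K H k"
proof -
  define ys' where "ys' = (\<lambda>i. if i < p then ys i else ys (Suc i))"
  have before: "i \<le> p \<Longrightarrow> face_chain K ys' i = face_chain K ys i" for i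
    by (induction i) (auto simp: ys'_def)
  have after: "p \<le> i \<Longrightarrow> face_chain K ys' i = face_chain K ys (Suc i)" for i
  proof (induction i rule: dec_induct)
    case base thus ?case using before[of p] trivial by simp
  next
    case (step i) thus ?case by (simp add: ys'_def)
  qed
  have "ys' i \<in> dual_cone n (face_chain K ys' i) \<inter> orth n H" if i: "i < k" for i
  proof (cases "i < p")
    case True thus ?thesis using before[of i] fr i by (simp add: ys'_def facial_reduction_seq_def)
  next
    case False
    hence "ys' i = ys (Suc i)" "face_chain K ys' i = face_chain K ys (Suc i)"
      using after[of i] by (simp_all add: ys'_def)
    thus ?thesis using fr i unfolding facial_reduction_seq_def by auto
  qed
  moreover have "face_chain K ys' k = min_face K (H \<inter> K)"
    using after[OF p] fr unfolding facial_reduction_seq_def by simp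
  ultimately show ?thesis unfolding facial_reduction_in_iff_seq facial_reduction_seq_def by blast
qed

lemma minimal_facial_reduction_nontrivial_steps:
  assumes fr: "facial_reduction_seq n K H ys (Suc k)"
    and minimal: "\<not> facial_reduction_in n K H k"
  shows "nontrivial_steps K ys (Suc k)"
  unfolding nontrivial_steps_def
proof (intro allI impI)
  fix p assume "p < Suc k"
  show "\<exists>X\<in>face_chain K ys p. minner (ys p) X \<noteq> 0"
  proof (rule ccontr)
    assume "\<not> ?thesis"
    hence "face_chain K ys (Suc p) = face_chain K ys p" by auto
    moreover have "p \<le> k" using \<open>p < Suc k\<close> by simp
    ultimately show False using facial_reduction_drop_trivial_step[OF fr] minimal by blast
  qed
qed

text \<open>\<open>H\<^sup>\<perp>\<close> is spanned by \<open>A\<^sub>1, \<dots>, A\<^sub>m, B\<close>; the coefficients of a dependence come from a kernel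
  vector of the singular matrix of inner products with this spanning set (padded by a zero row).\<close>

lemma det_eq_0_if_row_eq_0:
  fixes M :: "real mat"
  assumes M: "M \<in> carrier_mat N N" and k: "k < N" and row: "\<forall>j<N. M $$ (k,j) = 0"
  shows "det M = 0"
proof -
  have "M = mat\<^sub>r N N (\<lambda>i. if i = k then 0\<^sub>v N else row M i)"
    using M row by (intro eq_matI) auto
  moreover have "det (mat\<^sub>r N N (\<lambda>i. if i = k then 0\<^sub>v N else row M i)) = 0"
    by (rule det_row_0[OF k]) (use M in auto)
  ultimately show ?thesis by simp
qed

lemma orth_HD_space_lin_dependent:
  assumes A_sym: "\<forall>i<m. A i \<in> sym_mats n" and B: "B \<in> sym_mats n"
    and vs: "\<forall>i<N. vs i \<in> orth n (HD_space n m A B)" and N: "N > m + 1"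
  shows "\<exists>c. (\<exists>i<N. c i \<noteq> 0) \<and> (\<forall>X\<in>carrier_mat n n. (\<Sum>i<N. c i * minner (vs i) X) = 0)"
proof -
  define M where "M = mat N N (\<lambda>(j,i). if j < m then minner (A j) (vs i)
                                         else if j = m then minner B (vs i) else 0)"
  have Mc: "M \<in> carrier_mat N N" unfolding M_def by simp
  have "det M = 0" by (rule det_eq_0_if_row_eq_0[OF Mc, of "m + 1"]) (use N in \<open>auto simp: M_def\<close>)
  then obtain v where v: "v \<in> carrier_vec N" "v \<noteq> 0\<^sub>v N" "M *\<^sub>v v = 0\<^sub>v N"
    using det_0_iff_vec_prod_zero_field[OF Mc] by blast
  define c where "c = (\<lambda>i. v $ i)"
  have c_nonzero: "\<exists>i<N. c i \<noteq> 0"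
  proof (rule ccontr)
    assume "\<not> ?thesis"
    hence "v = 0\<^sub>v N" using v(1) unfolding c_def by (intro eq_vecI) auto
    thus False using v(2) by simp
  qed
  have row: "(\<Sum>i<N. M $$ (j,i) * c i) = 0" if "j < N" for j
  proof -
    have "(M *\<^sub>v v) $ j = 0" using v(3) that by simp
    thus ?thesis using that Mc v(1) unfolding c_def by (simp add: scalar_prod_def row_def atLeast0LessThan)
  qed
  have vs_sym: "\<forall>i<N. vs i \<in> sym_mats n" using vs unfolding orth_def by blast
  define S where "S = mlincomb n N c vs"
  have S: "S \<in> sym_mats n" unfolding S_def using mlincomb_sym_mats[OF vs_sym] .
  have Sc: "S \<in> carrier_mat n n" using S sym_mats_carrier by blast
  have lin: "trace_inner n S X = (\<Sum>i<N. c i * minner (vs i) X)" if "X \<in> carrier_mat n n" for X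
    unfolding S_def trace_inner_mlincomb_left
    using vs_sym that by (intro sum.cong refl) (auto simp: minner_sym_eq_trace_inner)
  have coeff: "minner Z S = (\<Sum>i<N. minner Z (vs i) * c i)" if "Z \<in> sym_mats n" for Z
    using lin[OF sym_mats_carrier[OF that]] vs_sym that sym_mats_carrier
    by (auto simp: minner_commute[of Z n] mult.commute trace_inner_commute minner_sym_eq_trace_inner[OF that Sc]
        intro!: sum.cong)
  have "minner (A j) S = 0" if "j < m" for j
  proof -
    have "minner (A j) S = (\<Sum>i<N. M $$ (j,i) * c i)"
      using coeff[of "A j"] A_sym that N by (auto simp: M_def intro!: sum.cong)
    thus ?thesis using row[of j] that N by simp
  qed
  moreover have "minner B S = 0"
  proof -
    have "minner B S = (\<Sum>i<N. M $$ (m,i) * c i)"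
      using coeff[OF B] N by (auto simp: M_def intro!: sum.cong)
    thus ?thesis using row[of m] N by simp
  qed
  ultimately have SH: "S \<in> HD_space n m A B" unfolding HD_space_def using S by auto
  have "trace_inner n S S = 0"
    using lin[OF Sc] vs SH unfolding orth_def by (auto intro: sum.neutral)
  hence "S = 0\<^sub>m n n" using trace_inner_self_eq_0[OF S] by simp
  hence "(\<Sum>i<N. c i * minner (vs i) X) = 0" if "X \<in> carrier_mat n n" for X
    using lin[OF that] unfolding trace_inner_def by simp
  thus ?thesis using c_nonzero by blast
qed

section \<open>Minimal facial reduction of the homogeneous dual\<close>

lemma dual_cone_add:
  assumes F: "F \<subseteq> carrier_mat n n" and Y: "Y \<in> dual_cone n F" and Z: "Z \<in> dual_cone n F"
  shows "Y + Z \<in> dual_cone n F"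
proof -
  have "Y \<in> carrier_mat n n" "Z \<in> carrier_mat n n"
    using Y Z sym_mats_carrier unfolding dual_cone_def by auto
  thus ?thesis using assms sym_mats_add unfolding dual_cone_def by (auto simp: minner_add_left)
qed

lemma orth_add:
  assumes H: "H \<subseteq> carrier_mat n n" and Y: "Y \<in> orth n H" and Z: "Z \<in> orth n H"
  shows "Y + Z \<in> orth n H"
proof -
  have "Y \<in> carrier_mat n n" "Z \<in> carrier_mat n n"
    using Y Z sym_mats_carrier unfolding orth_def by auto
  thus ?thesis using assms sym_mats_add unfolding orth_def by (auto simp: minner_add_left)
qed

lemma face_chain_add_to_first:
  assumes K: "K \<subseteq> carrier_mat n n" and y0: "ys 0 \<in> dual_cone n K" and W: "W \<in> dual_cone n K"
    and i: "1 \<le> i"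
  shows "face_chain K (ys(0 := ys 0 + W)) i = face_chain K ys i \<inter> {X. minner W X = 0}"
  using i
proof (induction i rule: dec_induct)
  case base
  have "minner (ys 0 + W) X = 0 \<longleftrightarrow> minner (ys 0) X = 0 \<and> minner W X = 0" if "X \<in> K" for X
  proof -
    have "ys 0 \<in> carrier_mat n n" "W \<in> carrier_mat n n"
      using y0 W sym_mats_carrier unfolding dual_cone_def by auto
    hence "minner (ys 0 + W) X = minner (ys 0) X + minner W X"
      using that K by (auto simp: minner_add_left)
    moreover have "minner (ys 0) X \<ge> 0" "minner W X \<ge> 0"
      using y0 W that unfolding dual_cone_def by auto
    ultimately show ?thesis by auto
  qed
  thus ?case by auto
next
  case (step i) thus ?case by auto
qed

lemma face_chain_insert_after_first:
  assumes i: "1 \<le> i"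
  shows "face_chain K (\<lambda>i. if i = 0 then ys 0 else if i = 1 then W else ys (i - 1)) (Suc i) =
         face_chain K ys i \<inter> {X. minner W X = 0}"
  using i by (induction i rule: dec_induct) auto

lemma facial_reduction_seq_add_to_first:
  assumes K: "K \<subseteq> carrier_mat n n" and H: "H \<subseteq> carrier_mat n n"
    and fr: "facial_reduction_seq n K H ys k" and k: "1 \<le> k"
    and W: "W \<in> dual_cone n K \<inter> orth n H"
    and vanish: "\<forall>X\<in>face_chain K ys k. minner W X = 0"
  shows "facial_reduction_seq n K H (ys(0 := ys 0 + W)) k"
proof -
  have y0: "ys 0 \<in> dual_cone n K \<inter> orth n H" using fr k unfolding facial_reduction_seq_def by auto
  have chain: "face_chain K (ys(0 := ys 0 + W)) j = face_chain K ys j \<inter> {X. minner W X = 0}"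
    if "1 \<le> j" for j
    using face_chain_add_to_first[OF K _ _ that] y0 W by blast
  have "(ys(0 := ys 0 + W)) i \<in> dual_cone n (face_chain K (ys(0 := ys 0 + W)) i) \<inter> orth n H"
    if i: "i < k" for i
  proof (cases "i = 0")
    case True thus ?thesis using y0 W dual_cone_add[OF K] orth_add[OF H] by simp
  next
    case False
    hence "1 \<le> i" by simp
    have "face_chain K (ys(0 := ys 0 + W)) i \<subseteq> face_chain K ys i"
      unfolding chain[OF \<open>1 \<le> i\<close>] by (rule Int_lower1)
    hence "dual_cone n (face_chain K ys i) \<subseteq> dual_cone n (face_chain K (ys(0 := ys 0 + W)) i)"
      by (rule dual_cone_antimono)
    moreover have "ys i \<in> dual_cone n (face_chain K ys i) \<inter> orth n H"
      using fr i unfolding facial_reduction_seq_def by blast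
    ultimately show ?thesis using False by auto
  qed
  moreover have "face_chain K (ys(0 := ys 0 + W)) k = face_chain K ys k"
    unfolding chain[OF k] using vanish by blast
  ultimately show ?thesis using fr unfolding facial_reduction_seq_def by simp
qed

lemma HD_space_subset_carrier: "HD_space n m A B \<subseteq> carrier_mat n n"
  unfolding HD_space_def using sym_mats_carrier by blast

lemma orth_HD_space_in_span:
  assumes A_sym: "\<forall>i<m. A i \<in> sym_mats n" and B: "B \<in> sym_mats n"
    and K: "K \<subseteq> carrier_mat n n"
    and ys: "\<forall>i<Suc m. ys i \<in> orth n (HD_space n m A B)" and steps: "nontrivial_steps K ys (Suc m)"
    and W: "W \<in> orth n (HD_space n m A B)"
  shows "\<exists>d. \<forall>X\<in>carrier_mat n n. minner W X = (\<Sum>i<Suc m. d i * minner (ys i) X)"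
proof -
  define vs where "vs = (\<lambda>i. if i < Suc m then ys i else W)"
  have "\<forall>i<Suc (Suc m). vs i \<in> orth n (HD_space n m A B)" using ys W unfolding vs_def by auto
  from orth_HD_space_lin_dependent[OF A_sym B this] obtain c where
    c: "\<exists>i<Suc (Suc m). c i \<noteq> 0" "\<forall>X\<in>carrier_mat n n. (\<Sum>i<Suc (Suc m). c i * minner (vs i) X) = 0"
    by auto
  have rel: "(\<Sum>i<Suc m. c i * minner (ys i) X) + c (Suc m) * minner W X = 0"
    if "X \<in> carrier_mat n n" for X
    using c(2) that unfolding vs_def by (simp add: sum.lessThan_Suc[of _ "Suc m"])
  have cW: "c (Suc m) \<noteq> 0"
  proof
    assume c0: "c (Suc m) = 0"
    hence "\<forall>X\<in>K. (\<Sum>i<Suc m. c i * minner (ys i) X) = 0" using rel K by auto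
    hence "\<forall>i<Suc m. c i = 0" using nontrivial_steps_lin_indep[OF steps] by blast
    thus False using c(1) c0 less_Suc_eq by auto
  qed
  have "minner W X = (\<Sum>i<Suc m. (- 1 / c (Suc m) * c i) * minner (ys i) X)"
    if X: "X \<in> carrier_mat n n" for X
  proof -
    have "minner W X = - 1 / c (Suc m) * (\<Sum>i<Suc m. c i * minner (ys i) X)"
      using rel[OF X] cW by (simp add: field_simps)
    thus ?thesis unfolding sum_distrib_left mult.assoc .
  qed
  thus ?thesis by (intro exI ballI)
qed

text \<open>If \<open>W \<in> K\<^sup>* \<inter> H\<^sup>\<perp>\<close> did not vanish on the first face \<open>F\<^sub>1\<close>, then inserting \<open>W\<close> after \<open>y\<^sub>1\<close>
  would produce \<open>m + 2\<close> nontrivial steps in \<open>H\<^sup>\<perp>\<close>, which has dimension \<open>m + 1\<close>.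
  That the later steps stay nontrivial is where minimality enters: adding \<open>W\<close> to \<open>y\<^sub>1\<close>
  yields another reduction sequence of length \<open>m + 1\<close>, whose faces are those of the
  extended sequence.\<close>

lemma minimal_facial_reduction_dual_orth_vanishes:
  assumes A_sym: "\<forall>i<m. A i \<in> sym_mats n" and B: "B \<in> sym_mats n"
    and K: "K \<subseteq> carrier_mat n n"
    and fr: "facial_reduction_seq n K (HD_space n m A B) ys (Suc m)"
    and minimal: "\<not> facial_reduction_in n K (HD_space n m A B) m"
    and W: "W \<in> dual_cone n K \<inter> orth n (HD_space n m A B)"
    and X: "X \<in> face_chain K ys 1"
  shows "minner W X = 0"
proof (rule ccontr)
  assume WX: "minner W X \<noteq> 0"
  let ?H = "HD_space n m A B"
  have ys: "\<forall>i<Suc m. ys i \<in> orth n ?H" using fr unfolding facial_reduction_seq_def by blast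
  have steps: "nontrivial_steps K ys (Suc m)"
    using minimal_facial_reduction_nontrivial_steps[OF fr minimal] .
  have "W \<in> orth n ?H" using W by blast
  from orth_HD_space_in_span[OF A_sym B K ys steps this] obtain d
    where d: "\<forall>X\<in>carrier_mat n n. minner W X = (\<Sum>i<Suc m. d i * minner (ys i) X)" ..
  have "minner W Y = 0" if Y: "Y \<in> face_chain K ys (Suc m)" for Y
  proof -
    have "Y \<in> carrier_mat n n" using Y face_chain_subset K by blast
    hence "minner W Y = (\<Sum>i<Suc m. d i * minner (ys i) Y)" using d by blast
    also have "\<dots> = 0" using face_chain_orth[OF _ Y] by simp
    finally show ?thesis .
  qed
  hence "\<forall>Y\<in>face_chain K ys (Suc m). minner W Y = 0" by blast
  from facial_reduction_seq_add_to_first[OF K HD_space_subset_carrier fr _ W this]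
  have steps': "nontrivial_steps K (ys(0 := ys 0 + W)) (Suc m)"
    using minimal_facial_reduction_nontrivial_steps minimal by simp
  define vs where "vs = (\<lambda>i. if i = 0 then ys 0 else if i = 1 then W else ys (i - 1))"
  have y0: "ys 0 \<in> dual_cone n K" and Wd: "W \<in> dual_cone n K"
    using fr W unfolding facial_reduction_seq_def by auto
  have chain: "face_chain K vs (Suc i) = face_chain K (ys(0 := ys 0 + W)) i" if "1 \<le> i" for i
  proof -
    have "face_chain K vs (Suc i) = face_chain K ys i \<inter> {X. minner W X = 0}"
      unfolding vs_def by (rule face_chain_insert_after_first[where ys = ys, OF that])
    also have "\<dots> = face_chain K (ys(0 := ys 0 + W)) i"
      by (rule sym[OF face_chain_add_to_first[where ys = ys, OF K y0 Wd that]])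
    finally show ?thesis .
  qed
  have vs_steps: "nontrivial_steps K vs (Suc (Suc m))"
    unfolding nontrivial_steps_def
  proof (intro allI impI)
    fix p assume p: "p < Suc (Suc m)"
    consider "p = 0" | "p = 1" | q where "p = Suc q" "1 \<le> q" by (cases p; cases "p = 1") auto
    thus "\<exists>X\<in>face_chain K vs p. minner (vs p) X \<noteq> 0"
    proof cases
      case 1
      have "\<exists>X\<in>face_chain K ys 0. minner (ys 0) X \<noteq> 0"
        using steps unfolding nontrivial_steps_def by blast
      thus ?thesis using 1 by (simp add: vs_def)
    next
      case 2 thus ?thesis using X WX by (auto simp: vs_def)
    next
      case 3
      have "vs p = (ys(0 := ys 0 + W)) q" using 3 by (simp add: vs_def)
      moreover have "face_chain K vs p = face_chain K (ys(0 := ys 0 + W)) q" using 3 chain by simp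
      moreover have "q < Suc m" using 3 p by simp
      ultimately show ?thesis using steps' unfolding nontrivial_steps_def by simp
    qed
  qed
  have "\<forall>i<Suc (Suc m). vs i \<in> orth n ?H" using ys W unfolding vs_def by (auto simp: less_Suc_eq)
  from orth_HD_space_lin_dependent[OF A_sym B this] obtain c where
    c: "\<exists>i<Suc (Suc m). c i \<noteq> 0" "\<forall>X\<in>carrier_mat n n. (\<Sum>i<Suc (Suc m). c i * minner (vs i) X) = 0"
    by auto
  have "\<forall>X\<in>K. (\<Sum>i<Suc (Suc m). c i * minner (vs i) X) = 0" using c(2) K by blast
  with nontrivial_steps_lin_indep[OF vs_steps] c(1) show False by blast
qed

lemma face_chain_shift: "face_chain (face_chain K ys 1) (\<lambda>i. ys (Suc i)) i = face_chain K ys (Suc i)"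
  by (induction i) auto

lemma minimal_facial_reduction_dual_orth_multiple:
  assumes A_sym: "\<forall>i<m. A i \<in> sym_mats n" and B: "B \<in> sym_mats n"
    and K: "K \<subseteq> carrier_mat n n"
    and fr: "facial_reduction_seq n K (HD_space n m A B) ys (Suc m)"
    and minimal: "\<not> facial_reduction_in n K (HD_space n m A B) m"
    and W: "W \<in> dual_cone n K \<inter> orth n (HD_space n m A B)"
  shows "\<exists>t. \<forall>X\<in>carrier_mat n n. minner W X = t * minner (ys 0) X"
proof -
  have ys: "\<forall>i<Suc m. ys i \<in> orth n (HD_space n m A B)" using fr unfolding facial_reduction_seq_def by blast
  have steps: "nontrivial_steps K ys (Suc m)"
    using minimal_facial_reduction_nontrivial_steps[OF fr minimal] .
  have "W \<in> orth n (HD_space n m A B)" using W by blast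
  from orth_HD_space_in_span[OF A_sym B K ys steps this] obtain d
    where d: "\<forall>X\<in>carrier_mat n n. minner W X = (\<Sum>i<Suc m. d i * minner (ys i) X)" ..
  hence split: "minner W X = d 0 * minner (ys 0) X + (\<Sum>i<m. d (Suc i) * minner (ys (Suc i)) X)"
    if "X \<in> carrier_mat n n" for X
    using that by (simp only: sum.lessThan_Suc_shift)
  let ?F1 = "face_chain K ys 1"
  have "nontrivial_steps ?F1 (\<lambda>i. ys (Suc i)) m"
    unfolding nontrivial_steps_def face_chain_shift
  proof (intro allI impI)
    fix i assume "i < m"
    hence "Suc i < Suc m" by simp
    thus "\<exists>X\<in>face_chain K ys (Suc i). minner (ys (Suc i)) X \<noteq> 0"
      using steps unfolding nontrivial_steps_def by blast
  qed
  moreover have "\<forall>X\<in>?F1. (\<Sum>i<m. d (Suc i) * minner (ys (Suc i)) X) = 0"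
  proof
    fix X assume X: "X \<in> ?F1"
    have "X \<in> carrier_mat n n" using X face_chain_subset K by blast
    thus "(\<Sum>i<m. d (Suc i) * minner (ys (Suc i)) X) = 0"
      using split minimal_facial_reduction_dual_orth_vanishes[OF A_sym B K fr minimal W X] X by simp
  qed
  ultimately have "\<forall>i<m. d (Suc i) = 0" by (rule nontrivial_steps_lin_indep)
  hence "\<forall>X\<in>carrier_mat n n. minner W X = d 0 * minner (ys 0) X" using split by simp
  thus ?thesis ..
qed

section \<open>Consequences for the primal-dual pair\<close>

lemma lin_indep_data_nonzero:
  assumes "lin_indep_data n m A B"
  shows "B \<noteq> 0\<^sub>m n n"
proof
  assume "B = 0\<^sub>m n n"
  hence "mlincomb n m (\<lambda>_. 0) A + 1 \<cdot>\<^sub>m B = 0\<^sub>m n n" using mlincomb_zero[of m "\<lambda>_. 0"] by simp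
  thus False using assms unfolding lin_indep_data_def by (metis one_neq_zero)
qed

lemma lincomb_orth_HD_space:
  assumes A_sym: "\<forall>i<m. A i \<in> sym_mats n" and B: "B \<in> sym_mats n"
  shows "mlincomb n m a A + b \<cdot>\<^sub>m B \<in> orth n (HD_space n m A B)"
proof -
  have W: "mlincomb n m a A + b \<cdot>\<^sub>m B \<in> sym_mats n"
    using mlincomb_sym_mats[OF A_sym] sym_mats_smult[OF B] sym_mats_add by blast
  have "minner (mlincomb n m a A + b \<cdot>\<^sub>m B) Y = 0" if Y: "Y \<in> HD_space n m A B" for Y
  proof -
    have Yc: "Y \<in> carrier_mat n n" using Y HD_space_subset_carrier by blast
    have Bc: "B \<in> carrier_mat n n" using B sym_mats_carrier by blast
    have "minner (mlincomb n m a A + b \<cdot>\<^sub>m B) Y = (\<Sum>i<m. a i * minner (A i) Y) + b * minner B Y"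
      using A_sym Yc Bc
      by (simp add: minner_eq_trace_inner[OF _ Yc] trace_inner_add_left trace_inner_smult_left
          trace_inner_mlincomb_left sym_mats_carrier)
    also have "\<dots> = 0" using Y unfolding HD_space_def by simp
    finally show ?thesis .
  qed
  thus ?thesis unfolding orth_def using W by blast
qed

text \<open>Once every element of \<open>(S\<^sup>n\<^sub>+)\<^sup>* \<inter> H\<^sup>\<perp>\<close> is a multiple of one functional, both \<open>B\<close> and
  \<open>\<Sum> a\<^sub>i A\<^sub>i + b B\<close> are multiples of it, hence of each other, and linear independence of the
  data forces \<open>a = 0\<close>.\<close>

lemma dual_cone_lincomb_coeffs_eq_0:
  assumes A_sym: "\<forall>i<m. A i \<in> sym_mats n" and B: "B \<in> dual_cone n (psd_cone n)"
    and lin_indep: "lin_indep_data n m A B"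
    and multiple: "\<forall>W\<in>dual_cone n (psd_cone n) \<inter> orth n (HD_space n m A B).
                     \<exists>t. \<forall>X\<in>carrier_mat n n. minner W X = t * minner Y0 X"
    and W: "mlincomb n m a A + b \<cdot>\<^sub>m B \<in> dual_cone n (psd_cone n)"
  shows "\<forall>i<m. a i = 0"
proof -
  have Bs: "B \<in> sym_mats n" using B unfolding dual_cone_def by blast
  have Bc: "B \<in> carrier_mat n n" using Bs sym_mats_carrier by blast
  have "B \<in> orth n (HD_space n m A B)" unfolding orth_def HD_space_def using Bs by auto
  then obtain s where s: "\<forall>X\<in>carrier_mat n n. minner B X = s * minner Y0 X" using multiple B by blast
  have "trace_inner n B B \<noteq> 0"
    using trace_inner_self_eq_0[OF Bs] lin_indep_data_nonzero[OF lin_indep] by blast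
  hence "minner B B \<noteq> 0" by (simp add: minner_sym_eq_trace_inner[OF Bs Bc])
  hence s0: "s \<noteq> 0" using s Bc by auto
  define W where "W = mlincomb n m a A + b \<cdot>\<^sub>m B"
  have Wc: "W \<in> carrier_mat n n" unfolding W_def using Bc by simp
  have Ws: "W \<in> sym_mats n" using W unfolding W_def dual_cone_def by blast
  obtain t where t: "\<forall>X\<in>carrier_mat n n. minner W X = t * minner Y0 X"
    using multiple W lincomb_orth_HD_space[OF A_sym Bs] unfolding W_def by blast
  define D where "D = W - (t / s) \<cdot>\<^sub>m B"
  have Dc: "D \<in> carrier_mat n n" unfolding D_def using Wc Bc by (metis minus_carrier_mat smult_carrier_mat)
  have Ds: "D \<in> sym_mats n"
    unfolding D_def using Ws Bs sym_mats_smult unfolding sym_mats_def by (auto simp: transpose_minus)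
  have "trace_inner n D D = trace_inner n W D - (t / s) * trace_inner n B D"
    unfolding D_def using Wc Bc by (simp add: trace_inner_diff_left trace_inner_smult_left)
  also have "\<dots> = minner W D - (t / s) * minner B D" using Wc Bc Dc by (simp add: minner_eq_trace_inner)
  also have "\<dots> = 0" using t s Dc s0 by simp
  finally have "D = 0\<^sub>m n n" using trace_inner_self_eq_0[OF Ds] by simp
  hence D0: "mlincomb n m a A + b \<cdot>\<^sub>m B - (t / s) \<cdot>\<^sub>m B = 0\<^sub>m n n" unfolding D_def W_def .
  have "mlincomb n m a A + (b - t / s) \<cdot>\<^sub>m B = 0\<^sub>m n n"
  proof (rule eq_matI)
    fix i j assume ij: "i < dim_row (0\<^sub>m n n :: real mat)" "j < dim_col (0\<^sub>m n n :: real mat)"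
    have "(mlincomb n m a A + b \<cdot>\<^sub>m B - (t / s) \<cdot>\<^sub>m B) $$ (i,j) = 0" using D0 ij by simp
    thus "(mlincomb n m a A + (b - t / s) \<cdot>\<^sub>m B) $$ (i,j) = 0\<^sub>m n n $$ (i,j)"
      using ij Bc by (simp add: algebra_simps)
  qed (use Bc in auto)
  thus ?thesis using lin_indep unfolding lin_indep_data_def by blast
qed

lemma dual_cone_psd_coneI:
  assumes M: "M \<in> sym_mats n" and pos: "\<And>Y. pos_def n Y \<Longrightarrow> trace_inner n M Y \<ge> 0"
  shows "M \<in> dual_cone n (psd_cone n)"
proof -
  have Mc: "M \<in> carrier_mat n n" using M sym_mats_carrier by blast
  have "trace_inner n M X \<ge> 0" if X: "X \<in> psd_cone n" for X
  proof (rule ccontr)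
    assume "\<not> trace_inner n M X \<ge> 0"
    hence neg: "trace_inner n M X < 0" by simp
    have Xc: "X \<in> carrier_mat n n" using X psd_cone_carrier by blast
    have lin: "trace_inner n M (X + e \<cdot>\<^sub>m 1\<^sub>m n) = trace_inner n M X + e * trace_inner n M (1\<^sub>m n)" for e
      using Xc by (simp add: trace_inner_add_right trace_inner_smult_right)
    define e where "e = (if trace_inner n M (1\<^sub>m n) \<le> 0 then 1
                         else - trace_inner n M X / (2 * trace_inner n M (1\<^sub>m n)))"
    have e: "e > 0" unfolding e_def using neg by (auto simp: field_simps)
    have "trace_inner n M X + e * trace_inner n M (1\<^sub>m n) < 0"
      using neg unfolding e_def by (auto simp: field_simps)
    thus False using pos[OF psd_add_smult_one_pos_def[OF X e]] lin by simp
  qed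
  thus ?thesis unfolding dual_cone_def using M Mc psd_cone_carrier minner_eq_trace_inner by auto
qed

text \<open>Otherwise the convex cone of residuals of positive definite matrices misses the origin, and
  a separating functional \<open>a\<close> puts \<open>\<Sum> a\<^sub>i A\<^sub>i - (a \<cdot> c) B\<close> in the dual cone.\<close>

lemma pos_def_solution_exists:
  assumes A_sym: "\<forall>i<m. A i \<in> sym_mats n" and B: "B \<in> sym_mats n"
    and coeffs: "\<forall>a b. mlincomb n m a A + b \<cdot>\<^sub>m B \<in> dual_cone n (psd_cone n) \<longrightarrow> (\<forall>i<m. a i = 0)"
  shows "\<exists>Y. pos_def n Y \<and> (\<forall>i<m. minner (A i) Y = c i * minner B Y)"
proof (rule ccontr)
  assume none: "\<not> ?thesis"
  have Bc: "B \<in> carrier_mat n n" using B sym_mats_carrier by blast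
  have Ac: "\<forall>i<m. A i \<in> carrier_mat n n" using A_sym sym_mats_carrier by blast
  have pdc: "pos_def n Y \<Longrightarrow> Y \<in> carrier_mat n n" for Y
    unfolding pos_def_def using sym_mats_carrier by blast
  define res where "res = (\<lambda>Y i. if i < m then trace_inner n (A i) Y - c i * trace_inner n B Y else 0)"
  define C where "C = res ` {Y. pos_def n Y}"
  have "\<exists>a. (\<exists>i<m. a i \<noteq> 0) \<and> (\<forall>u\<in>C. (\<Sum>i<m. a i * u i) \<ge> 0)"
  proof (rule convex_cone_in_halfspace)
    show "\<forall>u\<in>C. \<forall>i\<ge>m. u i = 0" unfolding C_def res_def by auto
    show "\<forall>u\<in>C. \<forall>v\<in>C. (\<lambda>i. u i + v i) \<in> C"
    proof (intro ballI)
      fix u v assume "u \<in> C" "v \<in> C"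
      then obtain Y Z where Y: "pos_def n Y" "u = res Y" and Z: "pos_def n Z" "v = res Z"
        unfolding C_def by auto
      have "(\<lambda>i. u i + v i) = res (Y + Z)"
        unfolding Y Z res_def using pdc[OF Y(1)] pdc[OF Z(1)] by (auto simp: trace_inner_add_right algebra_simps)
      thus "(\<lambda>i. u i + v i) \<in> C" unfolding C_def using pos_def_add[OF Y(1) Z(1)] by auto
    qed
    show "\<forall>u\<in>C. \<forall>r>0. (\<lambda>i. r * u i) \<in> C"
    proof (intro ballI allI impI)
      fix u and r :: real assume "u \<in> C" "r > 0"
      then obtain Y where Y: "pos_def n Y" "u = res Y" unfolding C_def by auto
      have "(\<lambda>i. r * u i) = res (r \<cdot>\<^sub>m Y)"
        unfolding Y res_def using pdc[OF Y(1)] by (auto simp: trace_inner_smult_right algebra_simps)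
      thus "(\<lambda>i. r * u i) \<in> C" unfolding C_def using pos_def_smult[OF Y(1) \<open>r > 0\<close>] by auto
    qed
    show "C \<noteq> {}" unfolding C_def using pos_def_one_mat by auto
    have "(\<lambda>i. 0) \<notin> C"
    proof
      assume "(\<lambda>i. 0) \<in> C"
      then obtain Y where Y: "pos_def n Y" "(\<lambda>i. 0) = res Y" unfolding C_def by auto
      have "minner (A i) Y = c i * minner B Y" if i: "i < m" for i
      proof -
        have "res Y i = 0" using Y(2) by metis
        thus ?thesis using i unfolding res_def
          by (simp add: minner_eq_trace_inner[OF Ac[rule_format, OF i] pdc[OF Y(1)]]
              minner_eq_trace_inner[OF Bc pdc[OF Y(1)]])
      qed
      thus False using none Y(1) by blast
    qed
    thus "\<exists>v. (\<forall>i\<ge>m. v i = 0) \<and> v \<notin> C" by auto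
  qed
  then obtain a where a: "\<exists>i<m. a i \<noteq> 0" "\<forall>u\<in>C. (\<Sum>i<m. a i * u i) \<ge> 0" by blast
  define M where "M = mlincomb n m a A + (- (\<Sum>i<m. a i * c i)) \<cdot>\<^sub>m B"
  have "M \<in> dual_cone n (psd_cone n)"
  proof (rule dual_cone_psd_coneI)
    show "M \<in> sym_mats n"
      unfolding M_def using mlincomb_sym_mats[OF A_sym] sym_mats_smult[OF B] sym_mats_add by blast
    fix Y assume Y: "pos_def n Y"
    have "(\<Sum>i<m. a i * res Y i) \<ge> 0" using a(2) Y unfolding C_def by blast
    moreover have "(\<Sum>i<m. a i * res Y i) = trace_inner n M Y"
      unfolding M_def res_def using Bc
      by (simp add: trace_inner_add_left trace_inner_smult_left trace_inner_mlincomb_left algebra_simps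
          sum_subtractf sum_distrib_left sum_distrib_right)
    ultimately show "trace_inner n M Y \<ge> 0" by simp
  qed
  hence "\<forall>i<m. a i = 0" using coeffs unfolding M_def by blast
  thus False using a(1) by blast
qed

lemma block_id_0: "block_id n 0 = 0\<^sub>m n n"
  unfolding block_id_def by (intro eq_matI) auto

lemma minner_block_id_pos:
  assumes r: "0 < r" "r \<le> n" and Y: "pos_def n Y"
  shows "minner (block_id n r) Y > 0"
proof -
  have "Y \<in> carrier_mat n n" using Y sym_mats_carrier unfolding pos_def_def by blast
  hence "minner (block_id n r) Y = (\<Sum>a<r. Y $$ (a,a))"
    using r by (simp add: minner_sym_eq_trace_inner[OF block_id_sym_mats] trace_inner_block_id)
  also have "\<dots> > 0" using r pos_def_diag_pos[OF Y] by (intro sum_pos) auto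
  finally show ?thesis .
qed

lemma P_feasible_iff_zero:
  assumes B: "B \<in> psd_cone n"
    and coeffs: "\<forall>a b. mlincomb n m a A + b \<cdot>\<^sub>m B \<in> dual_cone n (psd_cone n) \<longrightarrow> (\<forall>i<m. a i = 0)"
  shows "P_feasible n m A B x \<longleftrightarrow> (\<forall>i<m. x i = 0)"
proof
  have Bc: "B \<in> carrier_mat n n" using B psd_cone_carrier by blast
  assume "P_feasible n m A B x"
  hence "B - mlincomb n m x A \<in> dual_cone n (psd_cone n)"
    unfolding P_feasible_def using psd_cone_subset_dual_cone by blast
  moreover have "B - mlincomb n m x A = mlincomb n m (\<lambda>i. - x i) A + 1 \<cdot>\<^sub>m B"
    using Bc by (intro eq_matI) (auto simp: mlincomb_def sum_negf)
  ultimately have "\<forall>i<m. - x i = 0" using coeffs by metis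
  thus "\<forall>i<m. x i = 0" by simp
next
  have Bc: "B \<in> carrier_mat n n" using B psd_cone_carrier by blast
  assume "\<forall>i<m. x i = 0"
  hence "B - mlincomb n m x A = B" using Bc mlincomb_zero[of m x n A] by (intro eq_matI) auto
  thus "P_feasible n m A B x" unfolding P_feasible_def using B by simp
qed

lemma D_feasible_pos_def_with_value:
  assumes A_sym: "\<forall>i<m. A i \<in> sym_mats n" and B_def: "B = block_id n r" and r: "0 < r" "r \<le> n"
    and coeffs: "\<forall>a b. mlincomb n m a A + b \<cdot>\<^sub>m B \<in> dual_cone n (psd_cone n) \<longrightarrow> (\<forall>i<m. a i = 0)"
    and t: "t > 0"
  shows "\<exists>Y. pos_def n Y \<and> D_feasible n m A c Y \<and> minner B Y = t"
proof -
  have Bs: "B \<in> sym_mats n" using B_def block_id_sym_mats by simp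
  obtain Y where Y: "pos_def n Y" "\<forall>i<m. minner (A i) Y = (c i / t) * minner B Y"
    using pos_def_solution_exists[OF A_sym Bs coeffs, of "\<lambda>i. c i / t"] by blast
  have Yc: "Y \<in> carrier_mat n n" using Y(1) sym_mats_carrier unfolding pos_def_def by blast
  define \<beta> where "\<beta> = minner B Y"
  have \<beta>: "\<beta> > 0" unfolding \<beta>_def B_def using minner_block_id_pos[OF r Y(1)] .
  define Y' where "Y' = (t / \<beta>) \<cdot>\<^sub>m Y"
  have "pos_def n Y'" unfolding Y'_def using pos_def_smult[OF Y(1)] t \<beta> by simp
  moreover have "minner (A i) Y' = c i" if i: "i < m" for i
  proof -
    have "A i \<in> carrier_mat n n" using A_sym i sym_mats_carrier by blast
    hence "minner (A i) Y' = (t / \<beta>) * minner (A i) Y" unfolding Y'_def using Yc by (rule minner_smult_right)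
    thus ?thesis using Y(2) i t \<beta> unfolding \<beta>_def by simp
  qed
  moreover have "minner B Y' = t"
    using minner_smult_right[OF sym_mats_carrier[OF Bs] Yc] \<beta> unfolding Y'_def \<beta>_def by simp
  ultimately show ?thesis unfolding D_feasible_def using pos_def_psd_cone by blast
qed

lemma val_P_eq_0:
  assumes "\<forall>x. P_feasible n m A B x \<longleftrightarrow> (\<forall>i<m. x i = 0)"
  shows "val_P n m A B c = 0"
proof -
  have "(\<lambda>x. ereal (\<Sum>i<m. c i * x i)) ` {x. P_feasible n m A B x} = {0}"
    using assms by (auto intro!: image_eqI[of _ _ "\<lambda>_. 0"])
  thus ?thesis unfolding val_P_def by simp
qed

lemma val_D_eq_0:
  assumes approx: "\<And>t. t > 0 \<Longrightarrow> \<exists>Y. D_feasible n m A c Y \<and> minner B Y = t"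
    and nonneg: "\<And>Y. D_feasible n m A c Y \<Longrightarrow> minner B Y \<ge> 0"
  shows "val_D n m A B c = 0"
proof (rule antisym)
  show "val_D n m A B c \<le> 0"
  proof (rule ereal_le_epsilon2, simp)
    fix e :: real assume "e > 0"
    then obtain Y where "D_feasible n m A c Y" "minner B Y = e" using approx by blast
    thus "val_D n m A B c \<le> ereal e" unfolding val_D_def by (metis INF_lower mem_Collect_eq)
  qed
  show "0 \<le> val_D n m A B c"
    unfolding val_D_def using nonneg by (auto intro!: INF_greatest)
qed

theorem theorem4:
  fixes n m r :: nat and A :: "nat \<Rightarrow> real mat" and B :: "real mat" and c :: "nat \<Rightarrow> real"
  assumes A_sym: "\<forall>i<m. A i \<in> sym_mats n"
    and P_feas: "\<exists>x. P_feasible n m A B x"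
    and lin_indep: "lin_indep_data n m A B"
    and B_def: "B = block_id n r" and r_lt: "r < n"
    and B_max_rank: "\<forall>x. P_feasible n m A B x \<longrightarrow> mrank n (B - mlincomb n m x A) \<le> mrank n B"
    and sdeg: "sing_degree_is n (psd_cone n) (HD_space n m A B) (m + 1)"
  shows "(\<forall>x. P_feasible n m A B x \<longleftrightarrow> (\<forall>i<m. x i = 0))
       \<and> (\<exists>Y. D_feasible n m A c Y \<and> pos_def n Y)
       \<and> val_P n m A B c = 0 \<and> val_D n m A B c = 0"
proof -
  have B: "B \<in> psd_cone n" using B_def block_id_psd_cone by simp
  have r: "0 < r" "r \<le> n" using lin_indep_data_nonzero[OF lin_indep] B_def block_id_0 r_lt by auto
  obtain ys where fr: "facial_reduction_seq n (psd_cone n) (HD_space n m A B) ys (Suc m)"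
    and minimal: "\<not> facial_reduction_in n (psd_cone n) (HD_space n m A B) m"
    using sdeg unfolding sing_degree_is_def facial_reduction_in_iff_seq by auto
  have "\<forall>W\<in>dual_cone n (psd_cone n) \<inter> orth n (HD_space n m A B).
          \<exists>t. \<forall>X\<in>carrier_mat n n. minner W X = t * minner (ys 0) X"
    using minimal_facial_reduction_dual_orth_multiple[OF A_sym psd_cone_sym_mats[OF B] _ fr minimal]
      psd_cone_carrier by blast
  hence coeffs: "\<forall>a b. mlincomb n m a A + b \<cdot>\<^sub>m B \<in> dual_cone n (psd_cone n) \<longrightarrow> (\<forall>i<m. a i = 0)"
    using dual_cone_lincomb_coeffs_eq_0[OF A_sym _ lin_indep] B psd_cone_subset_dual_cone by blast
  have P: "\<forall>x. P_feasible n m A B x \<longleftrightarrow> (\<forall>i<m. x i = 0)"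
    using P_feasible_iff_zero[OF B coeffs] by blast
  have D: "\<exists>Y. pos_def n Y \<and> D_feasible n m A c Y \<and> minner B Y = t" if "t > 0" for t
    using D_feasible_pos_def_with_value[OF A_sym B_def r coeffs that] .
  have "val_D n m A B c = 0"
  proof (rule val_D_eq_0)
    show "\<exists>Y. D_feasible n m A c Y \<and> minner B Y = t" if "t > 0" for t using D[OF that] by blast
    show "minner B Y \<ge> 0" if "D_feasible n m A c Y" for Y
      using that B psd_cone_subset_dual_cone unfolding D_feasible_def dual_cone_def by blast
  qed
  moreover have "\<exists>Y. D_feasible n m A c Y \<and> pos_def n Y" using D[of 1] by auto
  ultimately show ?thesis using P val_P_eq_0[OF P] by blast
qed

end
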